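(* Let $G=(V,E)$ be a finite graph, $k\in\mathbb N$, $j_1,\dots,j_{2k}$ distinct vertices and $uv\in E$. For each $\mathbf m\in\mathbb N_0^E$, writing $E=\{e_1,\dots,e_{|E|}\}$, $$R(\mathbf m)=\frac{\partial^{\mathbf m_{e_1}+\dots+\mathbf m_{e_{|E|}}}}{\partial J_{e_1}^{\mathbf m_{e_1}}\cdots\partial J_{e_{|E|}}^{\mathbf m_{e_{|E|}}}}\left[\Big(\frac{Z_G}{2^{|V|}}\Big)^{k+1}\frac{\partial u_{2k}(\sigma_{j_1},\dots,\sigma_{j_{2k}})}{\partial J_{uv}}\right]\Bigg|_{\mathbf J=\mathbf 0}.$$
   Context: Ising model: on $G=(V,E)$ with $J_{uv}\ge0$, $\mathbb P_G(\sigma)=\exp[\sum_{uv\in E}J_{uv}\sigma_u\sigma_v]/Z_G$ on $\{-1,1\}^V$; $Z_G$ and all expectations are viewed as functions of $\mathbf J=(J_e)_{e\in E}$. Ursell function: $u_m(\sigma_{j_1},\dots,\sigma_{j_m})=\sum_{\mathscr P}(-1)^{|\mathscr P|-1}(|\mathscr P|-1)!\prod_{P\in\mathscr P}\langle\prod_{i\in P}\sigma_{j_i}\rangle_G$ over set partitions of $\{1,\dots,m\}$. Currents, sources $\partial\mathbf n$, connectivity $\overset{\mathbf n}{\longleftrightarrow}$, multinomial coefficients $\binom{\mathbf m}{\mathbf n^1,\dots,\mathbf n^{k+1}}=\prod_e \mathbf m_e!/(\mathbf n^1_e!\cdots\mathbf n^{k+1}_e!)$ are as usual: $\partial\mathbf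 n=\{x:\sum_{y:xy\in E}\mathbf n_{xy}\text{ odd}\}$, and $x\overset{\mathbf n}{\longleftrightarrow}y$ iff there is a path from $x$ to $y$ along edges with positive current. For a partition $\mathscr P$ of $\{j_1,\dots,j_{2k}\}$ into blocks of positive even size and $Q\in\mathscr P$, with a fixed enumeration $P'_1,\dots,P'_{|\mathscr P|-1}$ of $\mathscr P\setminus\{Q\}$, $R(\mathbf m,\mathscr P,Q)=\sum\binom{\mathbf m}{\mathbf n^1,\dots,\mathbf n^{k+1}}\mathbf 1[u\overset{\mathbf n^{|\mathscr P|}+\mathbf n^{|\mathscr P|+1}}{\not\longleftrightarrow}v]$, summed over $\mathbf n^1,\dots,\mathbf n^{k+1}\in\mathbb N_0^E$ with sum $\mathbf m$, $\partial\mathbf n^i=P'_i$ ($i<|\mathscr P|$), $\partial\mathbf n^{|\mathscr P|}=Q\triangle\{u,v\}$, $\partial\mathbf n^i=\emptyset$ ($i>|\mathscr P|$); $R(\mathbf m,\mathscr P)=\sum_{Q\in\mathscr P}R(\mathbf m,\mathscr P,Q)$; and $R(\mathbf m)=\sum_{\mathscr P}(-1)^{|\mathscr P|-1}(|\mathscr P|-1)!R(\mathbf m,\mathscr P)$, the sum over partitions $\mathscr P$ of $\{j_1,\dots,j_{2k}\}$ into blocks of positive even size. *)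

theory Defs
  imports "HOL-Analysis.Analysis" "HOL-Library.Disjoint_Sets"
begin

(* Graph G = (V,E): V a finite vertex set, E a set of edges, each edge a
   two-element subset {x,y} of V.  Couplings J : edges -> real. *)

definition configs :: "'a set \<Rightarrow> ('a \<Rightarrow> real) set" where
  "configs V = PiE V (\<lambda>_. {-1, 1})"

definition ising_weight :: "'a set set \<Rightarrow> ('a set \<Rightarrow> real) \<Rightarrow> ('a \<Rightarrow> real) \<Rightarrow> real" where
  "ising_weight E J \<sigma> = exp (\<Sum>e\<in>E. J e * (\<Prod>x\<in>e. \<sigma> x))"

definition Zfun :: "'a set \<Rightarrow> 'a set set \<Rightarrow> ('a set \<Rightarrow> real) \<Rightarrow> real" where
  "Zfun V E J = (\<Sum>\<sigma>\<in>configs V. ising_weight E J \<sigma>)"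

definition ising_expect :: "'a set \<Rightarrow> 'a set set \<Rightarrow> (('a \<Rightarrow> real) \<Rightarrow> real) \<Rightarrow> ('a set \<Rightarrow> real) \<Rightarrow> real" where
  "ising_expect V E f J = (\<Sum>\<sigma>\<in>configs V. f \<sigma> * ising_weight E J \<sigma>) / Zfun V E J"

definition ursell :: "'a set \<Rightarrow> 'a set set \<Rightarrow> nat \<Rightarrow> (nat \<Rightarrow> 'a) \<Rightarrow> ('a set \<Rightarrow> real) \<Rightarrow> real" where
  "ursell V E m j J =
     (\<Sum>\<P>\<in>{\<P>. partition_on {1..m} \<P>}.
        (-1) ^ (card \<P> - 1) * fact (card \<P> - 1) *
        (\<Prod>B\<in>\<P>. ising_expect V E (\<lambda>\<sigma>. \<Prod>i\<in>B. \<sigma> (j i)) J))"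

definition pdJ :: "'a set \<Rightarrow> (('a set \<Rightarrow> real) \<Rightarrow> real) \<Rightarrow> ('a set \<Rightarrow> real) \<Rightarrow> real" where
  "pdJ e F = (\<lambda>J. deriv (\<lambda>t. F (J(e := t))) (J e))"

fun mixed_pderiv :: "'a set list \<Rightarrow> ('a set \<Rightarrow> nat) \<Rightarrow> (('a set \<Rightarrow> real) \<Rightarrow> real) \<Rightarrow> ('a set \<Rightarrow> real) \<Rightarrow> real" where
  "mixed_pderiv [] m F = F"
| "mixed_pderiv (e # es) m F = (pdJ e ^^ m e) (mixed_pderiv es m F)"

definition sources :: "'a set set \<Rightarrow> ('a set \<Rightarrow> nat) \<Rightarrow> 'a set" where
  "sources E n = {x. odd (\<Sum>e\<in>{e\<in>E. x \<in> e}. n e)}"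

definition curr_connected :: "'a set set \<Rightarrow> ('a set \<Rightarrow> nat) \<Rightarrow> 'a \<Rightarrow> 'a \<Rightarrow> bool" where
  "curr_connected E n x y \<longleftrightarrow> (x, y) \<in> rtrancl {(a, b). {a, b} \<in> E \<and> n {a, b} > 0}"

definition current_tuples :: "'a set set \<Rightarrow> nat \<Rightarrow> ('a set \<Rightarrow> nat) \<Rightarrow> (nat \<Rightarrow> 'a set \<Rightarrow> nat) set" where
  "current_tuples E K m = {ns. (\<forall>i e. (i \<notin> {1..K} \<or> e \<notin> E) \<longrightarrow> ns i e = 0)
                              \<and> (\<forall>e\<in>E. (\<Sum>i=1..K. ns i e) = m e)}"

definition multinom :: "'a set set \<Rightarrow> nat \<Rightarrow> ('a set \<Rightarrow> nat) \<Rightarrow> (nat \<Rightarrow> 'a set \<Rightarrow> nat) \<Rightarrow> real" where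
  "multinom E K m ns = (\<Prod>e\<in>E. fact (m e) / (\<Prod>i=1..K. fact (ns i e)))"

definition R_PQ :: "'a set set \<Rightarrow> nat \<Rightarrow> 'a \<Rightarrow> 'a \<Rightarrow> ('a set \<Rightarrow> nat) \<Rightarrow> 'a set set \<Rightarrow> 'a set \<Rightarrow> real" where
  "R_PQ E k u v m \<P> Q =
     (let p = card \<P>;
          P' = (SOME f. bij_betw f {1..<p} (\<P> - {Q}))
      in (\<Sum>ns\<in>{ns \<in> current_tuples E (k + 1) m.
                   (\<forall>i\<in>{1..<p}. sources E (ns i) = P' i)
                 \<and> sources E (ns p) = (Q - {u, v}) \<union> ({u, v} - Q)
                 \<and> (\<forall>i\<in>{p<..k + 1}. sources E (ns i) = {})}.
            multinom E (k + 1) m ns *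
            (if \<not> curr_connected E (\<lambda>e. ns p e + ns (p + 1) e) u v then 1 else 0)))"

definition R_P :: "'a set set \<Rightarrow> nat \<Rightarrow> 'a \<Rightarrow> 'a \<Rightarrow> ('a set \<Rightarrow> nat) \<Rightarrow> 'a set set \<Rightarrow> real" where
  "R_P E k u v m \<P> = (\<Sum>Q\<in>\<P>. R_PQ E k u v m \<P> Q)"

definition R_fn :: "'a set set \<Rightarrow> nat \<Rightarrow> (nat \<Rightarrow> 'a) \<Rightarrow> 'a \<Rightarrow> 'a \<Rightarrow> ('a set \<Rightarrow> nat) \<Rightarrow> real" where
  "R_fn E k j u v m =
     (\<Sum>\<P>\<in>{\<P>. partition_on (j ` {1..2*k}) \<P> \<and> (\<forall>B\<in>\<P>. even (card B))}.
        (-1) ^ (card \<P> - 1) * fact (card \<P> - 1) * R_P E k u v m \<P>)"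

end

theory Submission
  imports Defs "HOL-Combinatorics.Multiset_Permutations"
begin

(* Reindexing through the injection j and discarding odd blocks, whose correlations vanish by
   spin-flip symmetry, writes the Ursell function as a sum over even partitions P of products of
   normalised correlations. Differentiating in J_uv and multiplying by Z^(k+1) turns the term of
   each block Q into a difference of two products of k + 1 unnormalised correlations. Expanding the
   exponentials, the mixed derivative at J = 0 of such a product counts (k+1)-tuples of currents with
   prescribed sources, with multinomial weights. By the switching lemma the second count equals the
   number of tuples of the first kind whose currents |P| and |P| + 1 jointly connect u and v, so the
   difference is R(m, P, Q). *)

section \<open>Multinomial sums as sums over labellings\<close>

lemma count_list_eq_card_indices: "count_list xs i = card {t. t < length xs \<and> xs ! t = i}"
  by (simp add: count_list_eq_length_filter length_filter_conv_card eq_commute)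

lemma size_sum_mset: "size (sum f S :: 'b multiset) = (\<Sum>x\<in>S. size (f x))"
  by (induction S rule: infinite_finite_induct) auto

lemma bij_betw_words_permutations_of_multiset:
  assumes A: "set_mset A \<subseteq> {1..K}"
  shows "bij_betw (\<lambda>w. map w [0..<size A])
           {w \<in> {..<size A} \<rightarrow>\<^sub>E {1..K}. \<forall>i\<in>{1..K}. card {t. t < size A \<and> w t = i} = count A i}
           (permutations_of_multiset A)"
    (is "bij_betw _ ?W _")
proof (rule bij_betw_byWitness[where f' = "\<lambda>xs t. if t < size A then xs ! t else undefined"])
  show "\<forall>w\<in>?W. (\<lambda>t. if t < size A then map w [0..<size A] ! t else undefined) = w"
    by (auto simp: PiE_def extensional_def fun_eq_iff)
  show "\<forall>xs\<in>permutations_of_multiset A. map (\<lambda>t. if t < size A then xs ! t else undefined) [0..<size A] = xs"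
    by (auto simp: list_eq_iff_nth_eq dest!: permutations_of_multisetD)
  show "(\<lambda>w. map w [0..<size A]) ` ?W \<subseteq> permutations_of_multiset A"
  proof
    fix xs assume "xs \<in> (\<lambda>w. map w [0..<size A]) ` ?W"
    then obtain w where w: "w \<in> ?W" "xs = map w [0..<size A]" by blast
    have "count (mset xs) i = count A i" for i
    proof -
      have "count (mset xs) i = card {t. t < length xs \<and> xs ! t = i}"
        by (simp only: count_mset count_list_eq_card_indices)
      also have "{t. t < length xs \<and> xs ! t = i} = {t. t < size A \<and> w t = i}"
        using w by auto
      also have "card {t. t < size A \<and> w t = i} = count A i"
      proof (cases "i \<in> {1..K}")
        case False
        then have "{t. t < size A \<and> w t = i} = {}" using w by (auto simp: PiE_def Pi_def)
        moreover have "count A i = 0" using A False by (auto simp: not_in_iff[symmetric])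
        ultimately show ?thesis by simp
      qed (use w in auto)
      finally show ?thesis .
    qed
    then show "xs \<in> permutations_of_multiset A"
      by (intro permutations_of_multisetI) (simp add: multiset_eq_iff)
  qed
  show "(\<lambda>xs t. if t < size A then xs ! t else undefined) ` permutations_of_multiset A \<subseteq> ?W"
  proof
    fix w assume "w \<in> (\<lambda>xs t. if t < size A then xs ! t else undefined) ` permutations_of_multiset A"
    then obtain xs where xs: "mset xs = A" and w: "w = (\<lambda>t. if t < size A then xs ! t else undefined)"
      by (auto dest: permutations_of_multisetD)
    have len: "length xs = size A" using xs by (metis size_mset)
    have "card {t. t < size A \<and> w t = i} = count A i" for i
    proof -
      have "{t. t < size A \<and> w t = i} = {t. t < length xs \<and> xs ! t = i}" using len w by auto
      then show ?thesis using xs by (metis count_list_eq_card_indices count_mset)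
    qed
    moreover have "w t \<in> {1..K}" if "t < size A" for t
    proof -
      have "xs ! t \<in># A" using that len xs by (metis nth_mem set_mset_mset)
      then show ?thesis using A w that by auto
    qed
    ultimately show "w \<in> ?W" using w by (auto simp: PiE_def extensional_def)
  qed
qed

lemma card_words_with_letter_counts:
  fixes c :: "nat \<Rightarrow> nat"
  assumes "(\<Sum>i=1..K. c i) = M"
  shows "real (card {w \<in> {..<M} \<rightarrow>\<^sub>E {1..K}. \<forall>i\<in>{1..K}. card {t. t < M \<and> w t = i} = c i})
         = fact M / (\<Prod>i=1..K. fact (c i))"
proof -
  define A where "A = (\<Sum>i\<in>{1..K}. replicate_mset (c i) i)"
  have count_A: "count A i = (if i \<in> {1..K} then c i else 0)" for i
    unfolding A_def count_sum by (auto simp: count_replicate_mset)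
  have set_A: "set_mset A \<subseteq> {1..K}" using count_A by (auto simp: count_greater_zero_iff[symmetric] split: if_splits)
  have size_A: "size A = M" unfolding A_def using assms by (simp add: size_sum_mset)
  have "{w \<in> {..<M} \<rightarrow>\<^sub>E {1..K}. \<forall>i\<in>{1..K}. card {t. t < M \<and> w t = i} = c i}
      = {w \<in> {..<size A} \<rightarrow>\<^sub>E {1..K}. \<forall>i\<in>{1..K}. card {t. t < size A \<and> w t = i} = count A i}"
    using count_A size_A by simp
  then have "card {w \<in> {..<M} \<rightarrow>\<^sub>E {1..K}. \<forall>i\<in>{1..K}. card {t. t < M \<and> w t = i} = c i}
      = card (permutations_of_multiset A)"
    using bij_betw_same_card[OF bij_betw_words_permutations_of_multiset[OF set_A]] by simp
  also have "\<dots> = fact M div (\<Prod>x\<in>set_mset A. fact (count A x))"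
    using card_permutations_of_multiset(1)[of A] size_A by simp
  finally have card_W: "card {w \<in> {..<M} \<rightarrow>\<^sub>E {1..K}. \<forall>i\<in>{1..K}. card {t. t < M \<and> w t = i} = c i}
      = fact M div (\<Prod>x\<in>set_mset A. fact (count A x))" .
  have dvd: "(\<Prod>x\<in>set_mset A. fact (count A x) :: nat) dvd fact M"
    using card_permutations_of_multiset(2)[of A] size_A by simp
  have "(\<Prod>x\<in>set_mset A. fact (count A x) :: nat) = (\<Prod>x\<in>{1..K}. fact (count A x))"
    using set_A by (intro prod.mono_neutral_left) (auto simp: not_in_iff)
  also have "\<dots> = (\<Prod>i=1..K. fact (c i))" using count_A by (intro prod.cong) auto
  finally show ?thesis
    using card_W dvd by (simp add: real_of_nat_div of_nat_prod)
qed

text \<open>A labelling assigns to each of the \<open>m e\<close> copies of every edge \<open>e\<close> one of the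
  \<open>K\<close> currents; grouping labellings by their counts turns the multinomial sums defining \<open>R\<close>
  into plain sums over labellings.\<close>

definition labelings :: "'a set set \<Rightarrow> nat \<Rightarrow> ('a set \<Rightarrow> nat) \<Rightarrow> ('a set \<Rightarrow> nat \<Rightarrow> nat) set" where
  "labelings E K m = PiE E (\<lambda>e. {..<m e} \<rightarrow>\<^sub>E {1..K})"

definition label_counts :: "'a set set \<Rightarrow> nat \<Rightarrow> ('a set \<Rightarrow> nat) \<Rightarrow> ('a set \<Rightarrow> nat \<Rightarrow> nat) \<Rightarrow> nat \<Rightarrow> 'a set \<Rightarrow> nat" where
  "label_counts E K m L = (\<lambda>i e. if e \<in> E \<and> i \<in> {1..K} then card {t. t < m e \<and> L e t = i} else 0)"

lemma finite_labelings: "finite E \<Longrightarrow> finite (labelings E K m)"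
  unfolding labelings_def by (intro finite_PiE) auto

lemma label_counts_in_current_tuples:
  assumes "L \<in> labelings E K m"
  shows "label_counts E K m L \<in> current_tuples E K m"
proof -
  have "(\<Sum>i=1..K. card {t. t < m e \<and> L e t = i}) = m e" if e: "e \<in> E" for e
  proof -
    have "(\<Sum>i\<in>{1..K}. \<Sum>t\<in>{t \<in> {..<m e}. L e t = i}. 1) = (\<Sum>t\<in>{..<m e}. 1::nat)"
      using assms e by (intro sum.group) (auto simp: labelings_def PiE_def Pi_def)
    then show ?thesis by (simp add: Collect_conj_eq[symmetric])
  qed
  then show ?thesis unfolding current_tuples_def by (auto simp: label_counts_def intro!: sum.cong)
qed

lemma card_labelings_with_counts:
  assumes "finite E" and ns: "ns \<in> current_tuples E K m"
  shows "real (card {L \<in> labelings E K m. label_counts E K m L = ns}) = multinom E K m ns"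
proof -
  define W where "W e = {w \<in> {..<m e} \<rightarrow>\<^sub>E {1..K}. \<forall>i\<in>{1..K}. card {t. t < m e \<and> w t = i} = ns i e}" for e
  have "{L \<in> labelings E K m. label_counts E K m L = ns} = PiE E W"
  proof (intro set_eqI iffI)
    fix L assume "L \<in> {L \<in> labelings E K m. label_counts E K m L = ns}"
    then show "L \<in> PiE E W"
      by (auto simp: labelings_def W_def label_counts_def PiE_def Pi_def fun_eq_iff split: if_splits)
  next
    fix L assume L: "L \<in> PiE E W"
    then have "label_counts E K m L i e = ns i e" for i e
      using ns by (auto simp: label_counts_def W_def current_tuples_def PiE_def Pi_def)
    with L show "L \<in> {L \<in> labelings E K m. label_counts E K m L = ns}"
      by (auto simp: labelings_def W_def PiE_def Pi_def)
  qed
  then have "real (card {L \<in> labelings E K m. label_counts E K m L = ns}) = (\<Prod>e\<in>E. real (card (W e)))"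
    using assms(1) by (simp add: card_PiE of_nat_prod)
  also have "\<dots> = multinom E K m ns"
    unfolding multinom_def W_def using ns
    by (intro prod.cong refl card_words_with_letter_counts) (auto simp: current_tuples_def)
  finally show ?thesis .
qed

lemma current_tuples_eq_label_counts_image:
  assumes "finite E"
  shows "current_tuples E K m = label_counts E K m ` labelings E K m"
proof
  show "current_tuples E K m \<subseteq> label_counts E K m ` labelings E K m"
  proof
    fix ns assume ns: "ns \<in> current_tuples E K m"
    have "multinom E K m ns > 0" unfolding multinom_def
      by (intro prod_pos divide_pos_pos) (auto intro: prod_pos)
    then have "{L \<in> labelings E K m. label_counts E K m L = ns} \<noteq> {}"
      using card_labelings_with_counts[OF assms ns] by (metis card.empty of_nat_0 less_irrefl)
    then show "ns \<in> label_counts E K m ` labelings E K m" by blast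
  qed
qed (use label_counts_in_current_tuples in blast)

lemma finite_current_tuples: "finite E \<Longrightarrow> finite (current_tuples E K m)"
  by (simp add: current_tuples_eq_label_counts_image finite_labelings)

lemma sum_current_tuples_multinom:
  assumes fE: "finite E"
  shows "(\<Sum>ns\<in>current_tuples E K m. multinom E K m ns * h ns)
       = (\<Sum>L\<in>labelings E K m. h (label_counts E K m L))"
proof -
  have "(\<Sum>L\<in>labelings E K m. h (label_counts E K m L))
      = (\<Sum>ns\<in>current_tuples E K m. \<Sum>L\<in>{L. L \<in> labelings E K m \<and> label_counts E K m L = ns}.
           h (label_counts E K m L))"
    by (rule sum.group[symmetric])
       (use finite_labelings[OF fE] finite_current_tuples[OF fE] label_counts_in_current_tuples in auto)
  also have "\<dots> = (\<Sum>ns\<in>current_tuples E K m. real (card {L \<in> labelings E K m. label_counts E K m L = ns}) * h ns)"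
    by (intro sum.cong refl) auto
  also have "\<dots> = (\<Sum>ns\<in>current_tuples E K m. multinom E K m ns * h ns)"
    using card_labelings_with_counts[OF fE] by simp
  finally show ?thesis by simp
qed

lemma prod_power_sum_eq_sum_labelings:
  fixes s :: "nat \<Rightarrow> 'a set \<Rightarrow> 'b::comm_semiring_1"
  assumes fE: "finite E"
  shows "(\<Prod>e\<in>E. (\<Sum>i=1..K. s i e) ^ m e)
       = (\<Sum>L\<in>labelings E K m. \<Prod>i=1..K. \<Prod>e\<in>E. s i e ^ label_counts E K m L i e)"
proof -
  have "(\<Prod>e\<in>E. (\<Sum>i=1..K. s i e) ^ m e) = (\<Prod>e\<in>E. \<Prod>t<m e. \<Sum>i\<in>{1..K}. s i e)"
    by simp
  also have "\<dots> = (\<Prod>e\<in>E. \<Sum>w\<in>{..<m e} \<rightarrow>\<^sub>E {1..K}. \<Prod>t<m e. s (w t) e)"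
    by (intro prod.cong refl prod_sum_PiE) auto
  also have "\<dots> = (\<Sum>L\<in>labelings E K m. \<Prod>e\<in>E. \<Prod>t<m e. s (L e t) e)"
    unfolding labelings_def by (rule prod_sum_PiE) (use fE in \<open>auto intro: finite_PiE\<close>)
  also have "\<dots> = (\<Sum>L\<in>labelings E K m. \<Prod>i=1..K. \<Prod>e\<in>E. s i e ^ label_counts E K m L i e)"
  proof (intro sum.cong refl)
    fix L assume L: "L \<in> labelings E K m"
    have "(\<Prod>t<m e. s (L e t) e) = (\<Prod>i=1..K. s i e ^ label_counts E K m L i e)" if e: "e \<in> E" for e
    proof -
      have "(\<Prod>t<m e. s (L e t) e) = (\<Prod>i\<in>{1..K}. \<Prod>t\<in>{t \<in> {..<m e}. L e t = i}. s (L e t) e)"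
        by (rule prod.group[symmetric]) (use L e in \<open>auto simp: labelings_def PiE_def Pi_def\<close>)
      also have "\<dots> = (\<Prod>i\<in>{1..K}. s i e ^ label_counts E K m L i e)"
        using e by (intro prod.cong refl) (simp add: label_counts_def Collect_conj_eq[symmetric])
      finally show ?thesis .
    qed
    then have "(\<Prod>e\<in>E. \<Prod>t<m e. s (L e t) e) = (\<Prod>e\<in>E. \<Prod>i=1..K. s i e ^ label_counts E K m L i e)"
      by simp
    also have "\<dots> = (\<Prod>i=1..K. \<Prod>e\<in>E. s i e ^ label_counts E K m L i e)" by (rule prod.swap)
    finally show "(\<Prod>e\<in>E. \<Prod>t<m e. s (L e t) e) = (\<Prod>i=1..K. \<Prod>e\<in>E. s i e ^ label_counts E K m L i e)" .
  qed
  finally show ?thesis .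
qed

section \<open>Spin sums and sources of currents\<close>

definition simple_graph :: "'a set \<Rightarrow> 'a set set \<Rightarrow> bool" where
  "simple_graph V E \<longleftrightarrow> finite V \<and> (\<forall>e\<in>E. \<exists>x y. e = {x, y} \<and> x \<in> V \<and> y \<in> V \<and> x \<noteq> y)"

lemma simple_graph_edge_subset: "simple_graph V E \<Longrightarrow> e \<in> E \<Longrightarrow> e \<subseteq> V"
  by (auto simp: simple_graph_def)

lemma simple_graph_finite_edges:
  assumes "simple_graph V E"
  shows "finite E"
proof (rule finite_subset)
  show "E \<subseteq> Pow V" using assms by (auto dest: simple_graph_edge_subset)
  show "finite (Pow V)" using assms by (simp add: simple_graph_def)
qed

lemma simple_graph_edge_neq: "simple_graph V E \<Longrightarrow> {a, b} \<in> E \<Longrightarrow> a \<noteq> b"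
  unfolding simple_graph_def by (metis doubleton_eq_iff insert_absorb2)

definition spin :: "'a set \<Rightarrow> ('a \<Rightarrow> real) \<Rightarrow> real" where
  "spin A \<sigma> = (\<Prod>x\<in>A. \<sigma> x)"

lemma finite_configs: "finite V \<Longrightarrow> finite (configs V)"
  unfolding configs_def by (intro finite_PiE) auto

lemma sources_subset:
  assumes "simple_graph V E"
  shows "sources E n \<subseteq> V"
proof
  fix x assume x: "x \<in> sources E n"
  have "{e \<in> E. x \<in> e} \<noteq> {}"
  proof
    assume "{e \<in> E. x \<in> e} = {}"
    with x show False by (simp add: sources_def)
  qed
  then show "x \<in> V" using simple_graph_edge_subset[OF assms] by auto
qed

lemma prod_if_zero:
  fixes c :: "'b::comm_semiring_1"
  assumes "finite I"
  shows "(\<Prod>i\<in>I. if P i then c else 0) = (if \<forall>i\<in>I. P i then c ^ card I else 0)"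
proof (cases "\<forall>i\<in>I. P i")
  case False
  then obtain i where "i \<in> I" "\<not> P i" by blast
  then show ?thesis using assms False by (intro trans[OF prod_zero]) auto
qed simp

lemma sum_configs_spin_monomial:
  assumes G: "simple_graph V E" and AV: "A \<subseteq> V"
  shows "(\<Sum>\<sigma>\<in>configs V. spin A \<sigma> * (\<Prod>e\<in>E. spin e \<sigma> ^ n e))
         = (if sources E n = A then 2 ^ card V else 0)"
proof -
  have fV: "finite V" using G by (simp add: simple_graph_def)
  have fE: "finite E" using G by (rule simple_graph_finite_edges)
  define d where "d x = (if x \<in> A then 1 else 0) + (\<Sum>e\<in>{e. e \<in> E \<and> x \<in> e}. n e)" for x
  have monomial: "spin A \<sigma> * (\<Prod>e\<in>E. spin e \<sigma> ^ n e) = (\<Prod>x\<in>V. \<sigma> x ^ d x)" for \<sigma>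
  proof -
    have "(\<Prod>x\<in>V. \<sigma> x ^ (if x \<in> A then 1 else 0)) = (\<Prod>x\<in>V. if x \<in> A then \<sigma> x else 1)"
      by (intro prod.cong) auto
    also have "\<dots> = spin A \<sigma>"
      using AV by (simp add: spin_def prod.inter_restrict[OF fV, symmetric] Int_absorb1)
    finally have "spin A \<sigma> = (\<Prod>x\<in>V. \<sigma> x ^ (if x \<in> A then 1 else 0))" ..
    moreover have "(\<Prod>e\<in>E. spin e \<sigma> ^ n e) = (\<Prod>e\<in>E. \<Prod>x\<in>{x. x \<in> V \<and> x \<in> e}. \<sigma> x ^ n e)"
    proof (intro prod.cong refl)
      fix e assume "e \<in> E"
      then have "{x. x \<in> V \<and> x \<in> e} = e" using simple_graph_edge_subset[OF G] by auto
      then show "spin e \<sigma> ^ n e = (\<Prod>x\<in>{x. x \<in> V \<and> x \<in> e}. \<sigma> x ^ n e)"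
        by (simp add: spin_def prod_power_distrib)
    qed
    moreover have "\<dots> = (\<Prod>x\<in>V. \<Prod>e\<in>{e. e \<in> E \<and> x \<in> e}. \<sigma> x ^ n e)"
      by (rule prod.swap_restrict[OF fE fV])
    moreover have "\<dots> = (\<Prod>x\<in>V. \<sigma> x ^ (\<Sum>e\<in>{e. e \<in> E \<and> x \<in> e}. n e))"
      by (simp add: power_sum)
    ultimately show ?thesis by (simp add: d_def power_add prod.distrib)
  qed
  have "(\<forall>x\<in>V. even (d x)) \<longleftrightarrow> (\<forall>x\<in>V. x \<in> A \<longleftrightarrow> x \<in> sources E n)"
    by (auto simp: d_def sources_def)
  then have sources_iff: "(\<forall>x\<in>V. even (d x)) \<longleftrightarrow> sources E n = A"
    using sources_subset[OF G, of n] AV by blast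
  have "(\<Sum>\<sigma>\<in>configs V. spin A \<sigma> * (\<Prod>e\<in>E. spin e \<sigma> ^ n e))
      = (\<Sum>\<sigma>\<in>V \<rightarrow>\<^sub>E {-1,1}. \<Prod>x\<in>V. \<sigma> x ^ d x)"
    unfolding configs_def monomial ..
  also have "\<dots> = (\<Prod>x\<in>V. \<Sum>s\<in>{-1,1::real}. s ^ d x)"
    by (rule prod_sum_PiE[symmetric]) (use fV in auto)
  also have "\<dots> = (\<Prod>x\<in>V. if even (d x) then 2 else 0)"
    by (intro prod.cong) auto
  also have "\<dots> = (if sources E n = A then 2 ^ card V else 0)"
    unfolding sources_iff[symmetric] by (rule prod_if_zero[OF fV])
  finally show ?thesis .
qed

definition source_count :: "'a set set \<Rightarrow> nat \<Rightarrow> ('a set \<Rightarrow> nat) \<Rightarrow> (nat \<Rightarrow> 'a set) \<Rightarrow> real" where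
  "source_count E K m A =
     (\<Sum>L\<in>labelings E K m. if \<forall>i\<in>{1..K}. sources E (label_counts E K m L i) = A i then 1 else 0)"

lemma sum_replica_configs_eq_source_count:
  assumes G: "simple_graph V E" and AV: "\<And>i. i \<in> {1..K} \<Longrightarrow> A i \<subseteq> V"
  shows "(\<Sum>\<sigma>s\<in>{1..K} \<rightarrow>\<^sub>E configs V. (\<Prod>i=1..K. spin (A i) (\<sigma>s i)) *
            (\<Prod>e\<in>E. (\<Sum>i=1..K. spin e (\<sigma>s i)) ^ m e))
       = 2 ^ (card V * K) * source_count E K m A"
proof -
  have fE: "finite E" using G by (rule simple_graph_finite_edges)
  have fV: "finite V" using G by (simp add: simple_graph_def)
  let ?c = "label_counts E K m"
  let ?ok = "\<lambda>L i. sources E (?c L i) = A i"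
  have "(\<Sum>\<sigma>s\<in>{1..K} \<rightarrow>\<^sub>E configs V. (\<Prod>i=1..K. spin (A i) (\<sigma>s i)) *
            (\<Prod>e\<in>E. (\<Sum>i=1..K. spin e (\<sigma>s i)) ^ m e))
      = (\<Sum>\<sigma>s\<in>{1..K} \<rightarrow>\<^sub>E configs V. \<Sum>L\<in>labelings E K m. \<Prod>i=1..K.
            spin (A i) (\<sigma>s i) * (\<Prod>e\<in>E. spin e (\<sigma>s i) ^ ?c L i e))"
    unfolding prod_power_sum_eq_sum_labelings[OF fE]
    by (intro sum.cong refl) (simp add: sum_distrib_left prod.distrib)
  also have "\<dots> = (\<Sum>L\<in>labelings E K m. \<Sum>\<sigma>s\<in>{1..K} \<rightarrow>\<^sub>E configs V. \<Prod>i=1..K.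
            spin (A i) (\<sigma>s i) * (\<Prod>e\<in>E. spin e (\<sigma>s i) ^ ?c L i e))"
    by (rule sum.swap)
  also have "\<dots> = (\<Sum>L\<in>labelings E K m. \<Prod>i=1..K. \<Sum>\<sigma>\<in>configs V.
            spin (A i) \<sigma> * (\<Prod>e\<in>E. spin e \<sigma> ^ ?c L i e))"
    by (intro sum.cong refl prod_sum_PiE[symmetric]) (use fV finite_configs in auto)
  also have "\<dots> = (\<Sum>L\<in>labelings E K m. \<Prod>i=1..K. if ?ok L i then 2 ^ card V else 0)"
    by (intro sum.cong refl prod.cong sum_configs_spin_monomial[OF G] AV) auto
  also have "\<dots> = (\<Sum>L\<in>labelings E K m. 2 ^ (card V * K) * (if \<forall>i\<in>{1..K}. ?ok L i then 1 else 0))"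
    by (intro sum.cong refl) (simp add: prod_if_zero power_mult)
  finally show ?thesis by (simp add: source_count_def sum_distrib_left)
qed

definition unit_current :: "'b set \<Rightarrow> 'b \<Rightarrow> nat" where
  "unit_current S = (\<lambda>e. if e \<in> S then 1 else 0)"

lemma sources_cong_parity:
  assumes "finite E" "\<And>e. e \<in> E \<Longrightarrow> even (n e) \<longleftrightarrow> even (n' e)"
  shows "sources E n = sources E n'"
proof -
  have "odd (\<Sum>e\<in>{e \<in> E. x \<in> e}. n e) \<longleftrightarrow> odd (\<Sum>e\<in>{e \<in> E. x \<in> e}. n' e)" for x
  proof -
    have f: "finite {e \<in> E. x \<in> e}" using assms(1) by simp
    have "{a \<in> {e \<in> E. x \<in> e}. odd (n a)} = {a \<in> {e \<in> E. x \<in> e}. odd (n' a)}" using assms(2) by auto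
    then show ?thesis using even_sum_iff[OF f, of n] even_sum_iff[OF f, of n'] by simp
  qed
  then show ?thesis by (simp add: sources_def)
qed

lemma sources_add:
  "sources E (\<lambda>e. n e + n' e) = sym_diff (sources E n) (sources E n')"
  by (auto simp: sources_def sum.distrib)

lemma sources_unit_current_edge:
  assumes G: "simple_graph V E" and e: "{a, b} \<in> E"
  shows "sources E (unit_current {{a, b}}) = {a, b}"
proof -
  have "(\<Sum>e\<in>{e \<in> E. x \<in> e}. unit_current {{a, b}} e) = (if x \<in> {a, b} then 1 else 0)" for x
  proof (cases "x \<in> {a, b}")
    case True
    then have "(\<Sum>e\<in>{e \<in> E. x \<in> e}. unit_current {{a, b}} e) = (\<Sum>e\<in>{{a, b}}. unit_current {{a, b}} e)"
      using e simple_graph_finite_edges[OF G] by (intro sum.mono_neutral_right) (auto simp: unit_current_def)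
    then show ?thesis using True by (simp add: unit_current_def)
  next
    case False
    then have "(\<Sum>e\<in>{e \<in> E. x \<in> e}. unit_current {{a, b}} e) = 0"
      by (intro sum.neutral) (auto simp: unit_current_def)
    then show ?thesis using False by simp
  qed
  then show ?thesis by (auto simp: sources_def)
qed

lemma curr_connected_imp_path:
  assumes G: "simple_graph V E" and "curr_connected E n x y"
  shows "\<exists>\<gamma>. \<gamma> \<subseteq> {e \<in> E. n e > 0} \<and> sources E (unit_current \<gamma>) = sym_diff {x} {y}"
  using assms(2) unfolding curr_connected_def
proof (induction rule: rtrancl_induct)
  case base
  have "sources E (unit_current {}) = {}" by (simp add: sources_def unit_current_def)
  then show ?case by auto
next
  case (step y z)
  obtain \<gamma> where \<gamma>: "\<gamma> \<subseteq> {e \<in> E. n e > 0}" "sources E (unit_current \<gamma>) = sym_diff {x} {y}"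
    using step.IH by blast
  have yz: "{y, z} \<in> E" "n {y, z} > 0" using step.hyps(2) by auto
  define \<gamma>' where "\<gamma>' = sym_diff \<gamma> {{y, z}}"
  have "sources E (unit_current \<gamma>') = sources E (\<lambda>e. unit_current \<gamma> e + unit_current {{y, z}} e)"
    by (rule sources_cong_parity[OF simple_graph_finite_edges[OF G]]) (auto simp: unit_current_def \<gamma>'_def)
  also have "\<dots> = sym_diff {x} {z}"
    unfolding sources_add \<gamma>(2) sources_unit_current_edge[OF G yz(1)]
    using simple_graph_edge_neq[OF G yz(1)] by auto
  finally show ?case using \<gamma>(1) yz by (intro exI[of _ \<gamma>']) (auto simp: \<gamma>'_def)
qed

text \<open>A current with sources exactly \<open>{u, v}\<close> connects \<open>u\<close> and \<open>v\<close>: otherwise the component of \<open>u\<close>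
  would contain exactly one source, although the degrees inside a component sum to an even number.\<close>

lemma sources_eq_pair_imp_curr_connected:
  assumes G: "simple_graph V E" and s: "sources E n = {u, v}" and uv: "u \<noteq> v"
  shows "curr_connected E n u v"
proof (rule ccontr)
  assume nc: "\<not> curr_connected E n u v"
  let ?R = "{(a, b). {a, b} \<in> E \<and> n {a, b} > 0}"
  define C where "C = {y. (u, y) \<in> ?R\<^sup>*} \<inter> V"
  define deg where "deg x = (\<Sum>e\<in>{e. e \<in> E \<and> x \<in> e}. n e)" for x
  have fC: "finite C" using G by (simp add: C_def simple_graph_def)
  have fE: "finite E" using simple_graph_finite_edges[OF G] .
  have "u \<in> C" using sources_subset[OF G] s by (auto simp: C_def)
  moreover have "v \<notin> C" using nc by (simp add: C_def curr_connected_def)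
  ultimately have "{x \<in> C. odd (deg x)} = {u}" using s by (auto simp: deg_def sources_def)
  then have "odd (\<Sum>x\<in>C. deg x)" using even_sum_iff[OF fC, of deg] by simp
  moreover have "(\<Sum>x\<in>C. deg x) = (\<Sum>e\<in>E. \<Sum>x\<in>{x. x \<in> C \<and> x \<in> e}. n e)"
    unfolding deg_def by (rule sum.swap_restrict[OF fC fE])
  moreover have "even (\<Sum>x\<in>{x. x \<in> C \<and> x \<in> e}. n e)" if e: "e \<in> E" for e
  proof (cases "n e = 0")
    case False
    obtain a b where ab: "e = {a, b}" "a \<noteq> b" using e G by (auto simp: simple_graph_def)
    have "(a, b) \<in> ?R" "(b, a) \<in> ?R" using e ab False by (auto simp: insert_commute)
    then have "a \<in> C \<longleftrightarrow> b \<in> C" using ab e simple_graph_edge_subset[OF G e]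
      by (auto simp: C_def intro: rtrancl_into_rtrancl)
    then have "{x. x \<in> C \<and> x \<in> e} = {} \<or> {x. x \<in> C \<and> x \<in> e} = {a, b}" using ab by auto
    then show ?thesis using ab by (elim disjE) (simp_all only: sum.empty, simp_all)
  qed simp
  ultimately show False by (simp add: dvd_sum)
qed

lemma curr_connected_mono:
  assumes "curr_connected E n u v" "\<And>e. e \<in> E \<Longrightarrow> n e > 0 \<Longrightarrow> n' e > 0"
  shows "curr_connected E n' u v"
proof -
  have "{(a, b). {a, b} \<in> E \<and> n {a, b} > 0} \<subseteq> {(a, b). {a, b} \<in> E \<and> n' {a, b} > 0}"
    using assms(2) by auto
  then show ?thesis using assms(1) unfolding curr_connected_def by (meson rtrancl_mono subsetD)
qed

section \<open>The switching lemma\<close>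

text \<open>On labellings whose currents \<open>p\<close> and \<open>p + 1\<close> together connect \<open>u\<close> and
  \<open>v\<close>, choose edges \<open>\<gamma>\<close> in the support of their sum forming a current with sources \<open>{u, v}\<close>; moving, on
  every edge of \<open>\<gamma>\<close>, its first copy labelled \<open>p\<close> or \<open>p + 1\<close> to the other label toggles \<open>u\<close> and \<open>v\<close> in
  both source sets. The sum of the two currents, hence \<open>\<gamma>\<close>, is unchanged, so this is an involution.\<close>

locale current_switching =
  fixes V :: "'a set" and E :: "'a set set" and K :: nat and m :: "'a set \<Rightarrow> nat"
    and p :: nat and u v :: 'a
  assumes graph: "simple_graph V E" and p_pos: "1 \<le> p" and p_less: "Suc p \<le> K" and uv: "u \<noteq> v"
begin

definition pair_current :: "('a set \<Rightarrow> nat \<Rightarrow> nat) \<Rightarrow> 'a set \<Rightarrow> nat" where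
  "pair_current L = (\<lambda>e. label_counts E K m L p e + label_counts E K m L (Suc p) e)"

definition pair_connected :: "('a set \<Rightarrow> nat \<Rightarrow> nat) \<Rightarrow> bool" where
  "pair_connected L \<longleftrightarrow> curr_connected E (pair_current L) u v"

definition switch_path :: "('a set \<Rightarrow> nat \<Rightarrow> nat) \<Rightarrow> 'a set set" where
  "switch_path L = (SOME \<gamma>. \<gamma> \<subseteq> {e \<in> E. pair_current L e > 0} \<and> sources E (unit_current \<gamma>) = {u, v})"

definition first_pair_copy :: "('a set \<Rightarrow> nat \<Rightarrow> nat) \<Rightarrow> 'a set \<Rightarrow> nat" where
  "first_pair_copy L e = (LEAST t. t < m e \<and> L e t \<in> {p, Suc p})"

definition swap_pair :: "nat \<Rightarrow> nat" where
  "swap_pair i = (if i = p then Suc p else if i = Suc p then p else i)"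

definition switch :: "('a set \<Rightarrow> nat \<Rightarrow> nat) \<Rightarrow> 'a set \<Rightarrow> nat \<Rightarrow> nat" where
  "switch L = (\<lambda>e t. if e \<in> E \<and> e \<in> switch_path L \<and> t < m e \<and> t = first_pair_copy L e
                     then swap_pair (L e t) else L e t)"

lemma finite_E: "finite E"
  using simple_graph_finite_edges[OF graph] .

lemma swap_pair_mem_iff: "swap_pair i \<in> {p, Suc p} \<longleftrightarrow> i \<in> {p, Suc p}"
  by (auto simp: swap_pair_def)

lemma switch_mem_iff: "switch L e t \<in> {p, Suc p} \<longleftrightarrow> L e t \<in> {p, Suc p}"
  unfolding switch_def using swap_pair_mem_iff by auto

lemma pair_current_eq_card:
  assumes "e \<in> E"
  shows "pair_current L e = card {t. t < m e \<and> L e t \<in> {p, Suc p}}"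
proof -
  have "{t. t < m e \<and> L e t \<in> {p, Suc p}} = {t. t < m e \<and> L e t = p} \<union> {t. t < m e \<and> L e t = Suc p}"
    by auto
  moreover have "card ({t. t < m e \<and> L e t = p} \<union> {t. t < m e \<and> L e t = Suc p})
      = card {t. t < m e \<and> L e t = p} + card {t. t < m e \<and> L e t = Suc p}"
    by (rule card_Un_disjoint) auto
  ultimately show ?thesis using assms p_pos p_less by (simp add: pair_current_def label_counts_def)
qed

lemma pair_current_switch: "pair_current (switch L) = pair_current L"
proof
  fix e show "pair_current (switch L) e = pair_current L e"
    using pair_current_eq_card switch_mem_iff
    by (cases "e \<in> E") (presburger, simp add: pair_current_def label_counts_def)
qed

lemma switch_path_switch: "switch_path (switch L) = switch_path L"
  unfolding switch_path_def pair_current_switch ..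

lemma pair_connected_switch: "pair_connected (switch L) = pair_connected L"
  unfolding pair_connected_def pair_current_switch ..

lemma first_pair_copy_switch: "first_pair_copy (switch L) = first_pair_copy L"
  unfolding first_pair_copy_def using switch_mem_iff by presburger

lemma switch_switch: "switch (switch L) = L"
proof (intro ext)
  fix e t
  have "switch (switch L) e t = (if e \<in> E \<and> e \<in> switch_path L \<and> t < m e \<and> t = first_pair_copy L e
                                 then swap_pair (switch L e t) else switch L e t)"
    unfolding switch_def[of "switch L"] switch_path_switch first_pair_copy_switch ..
  then show "switch (switch L) e t = L e t"
    unfolding switch_def swap_pair_def by auto
qed

lemma switch_labelings:
  assumes "L \<in> labelings E K m"
  shows "switch L \<in> labelings E K m"
proof -
  have "L e t \<in> {1..K}" if "e \<in> E" "t < m e" for e t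
    using assms that by (auto simp: labelings_def PiE_iff)
  then have "switch L e t \<in> {1..K}" if "e \<in> E" "t < m e" for e t
    using that p_pos p_less unfolding switch_def swap_pair_def by auto
  moreover have "switch L e t = undefined" if "e \<in> E" "\<not> t < m e" for e t
    using assms that unfolding switch_def by (auto simp: labelings_def PiE_iff extensional_def)
  moreover have "switch L e = undefined" if "e \<notin> E" for e
    using assms that unfolding switch_def by (auto simp: labelings_def PiE_iff extensional_def)
  ultimately show ?thesis unfolding labelings_def PiE_iff extensional_def by auto
qed

lemma switch_path_props:
  assumes "pair_connected L"
  shows "switch_path L \<subseteq> {e \<in> E. pair_current L e > 0}" "sources E (unit_current (switch_path L)) = {u, v}"
proof -
  have "\<exists>\<gamma>. \<gamma> \<subseteq> {e \<in> E. pair_current L e > 0} \<and> sources E (unit_current \<gamma>) = sym_diff {u} {v}"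
    using curr_connected_imp_path[OF graph] assms by (simp add: pair_connected_def)
  moreover have "sym_diff {u} {v} = {u, v}" using uv by auto
  ultimately show "switch_path L \<subseteq> {e \<in> E. pair_current L e > 0}" "sources E (unit_current (switch_path L)) = {u, v}"
    unfolding switch_path_def by (metis (mono_tags, lifting) someI_ex)+
qed

lemma label_counts_switch_other:
  assumes "i \<notin> {p, Suc p}"
  shows "label_counts E K m (switch L) i = label_counts E K m L i"
proof -
  have "switch L e t = i \<longleftrightarrow> L e t = i" for e t
    using assms swap_pair_mem_iff[of "L e t"] unfolding switch_def swap_pair_def by auto
  then have "{t. t < m e \<and> switch L e t = i} = {t. t < m e \<and> L e t = i}" for e by blast
  then show ?thesis unfolding label_counts_def by (simp only:)
qed

lemma label_counts_switch_parity:
  assumes c: "pair_connected L" and i: "i \<in> {p, Suc p}" and e: "e \<in> E"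
  shows "even (label_counts E K m (switch L) i e)
     \<longleftrightarrow> even (label_counts E K m L i e + unit_current (switch_path L) e)"
proof -
  define S where "S = {t. t < m e \<and> L e t = i}"
  define S' where "S' = {t. t < m e \<and> switch L e t = i}"
  have finite_S: "finite S" by (simp add: S_def)
  have counts: "label_counts E K m L i e = card S" "label_counts E K m (switch L) i e = card S'"
    using e i p_pos p_less by (auto simp: label_counts_def S_def S'_def)
  show ?thesis
  proof (cases "e \<in> switch_path L")
    case False
    then have "S' = S" unfolding S_def S'_def switch_def by auto
    then show ?thesis using counts False by (simp add: unit_current_def)
  next
    case True
    define t0 where "t0 = first_pair_copy L e"
    have "pair_current L e > 0" using switch_path_props(1)[OF c] True by auto
    then obtain t1 where "t1 < m e \<and> L e t1 \<in> {p, Suc p}"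
      using pair_current_eq_card[OF e] by (metis (no_types, lifting) card.empty empty_Collect_eq less_irrefl)
    then have t0: "t0 < m e" "L e t0 \<in> {p, Suc p}"
      unfolding t0_def first_pair_copy_def by (metis (mono_tags, lifting) LeastI)+
    have switch_t0: "switch L e t = (if t = t0 then swap_pair (L e t) else L e t)" if "t < m e" for t
      using True e that unfolding switch_def t0_def by auto
    show ?thesis
    proof (cases "L e t0 = i")
      case True
      have "swap_pair (L e t0) \<noteq> i" using True i by (auto simp: swap_pair_def)
      then have "S' = S - {t0}" using switch_t0 by (auto simp: S_def S'_def split: if_splits)
      moreover have "t0 \<in> S" using t0 True by (simp add: S_def)
      ultimately have "card S = Suc (card S')" by (metis card_Suc_Diff1 finite_S)
      then show ?thesis using counts \<open>e \<in> switch_path L\<close> by (simp add: unit_current_def)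
    next
      case False
      have "swap_pair (L e t0) = i" using False t0(2) i by (auto simp: swap_pair_def)
      then have "S' = insert t0 S" using switch_t0 t0(1) False by (auto simp: S_def S'_def split: if_splits)
      moreover have "t0 \<notin> S" using False by (simp add: S_def)
      ultimately have "card S' = Suc (card S)" using finite_S by simp
      then show ?thesis using counts \<open>e \<in> switch_path L\<close> by (simp add: unit_current_def)
    qed
  qed
qed

lemma sources_switch:
  assumes c: "pair_connected L" and i: "i \<in> {p, Suc p}"
  shows "sources E (label_counts E K m (switch L) i) = sym_diff (sources E (label_counts E K m L i)) {u, v}"
proof -
  have "sources E (label_counts E K m (switch L) i)
      = sources E (\<lambda>e. label_counts E K m L i e + unit_current (switch_path L) e)"
    by (rule sources_cong_parity[OF finite_E]) (use label_counts_switch_parity[OF c i] in auto)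
  also have "\<dots> = sym_diff (sources E (label_counts E K m L i)) {u, v}"
    unfolding sources_add switch_path_props(2)[OF c] ..
  finally show ?thesis .
qed

lemma sum_connected_switch:
  fixes A :: "nat \<Rightarrow> 'a set"
  defines "A' \<equiv> A(p := sym_diff (A p) {u, v}, Suc p := sym_diff (A (Suc p)) {u, v})"
  shows "(\<Sum>L\<in>labelings E K m. if (\<forall>i\<in>{1..K}. sources E (label_counts E K m L i) = A i) \<and> pair_connected L then 1 else 0 :: real)
       = (\<Sum>L\<in>labelings E K m. if (\<forall>i\<in>{1..K}. sources E (label_counts E K m L i) = A' i) \<and> pair_connected L then 1 else 0)"
proof -
  let ?S = "{L \<in> labelings E K m. pair_connected L}"
  let ?ok = "\<lambda>A L. \<forall>i\<in>{1..K}. sources E (label_counts E K m L i) = A i"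
  have fin: "finite (labelings E K m)" using finite_labelings[OF finite_E] .
  have restrict: "(\<Sum>L\<in>labelings E K m. if ?ok B L \<and> pair_connected L then 1 else 0 :: real)
      = (\<Sum>L\<in>?S. if ?ok B L then 1 else 0)" for B
    by (subst sum.inter_filter[OF fin]) (intro sum.cong, auto)
  have "(\<Sum>L\<in>?S. if ?ok A L then 1 else 0 :: real) = (\<Sum>L\<in>?S. if ?ok A' L then 1 else 0)"
  proof (rule sum.reindex_bij_witness[where i = switch and j = switch])
    fix L assume L: "L \<in> ?S"
    then have "sources E (label_counts E K m (switch L) i) = A' i \<longleftrightarrow> sources E (label_counts E K m L i) = A i" for i
      using sources_switch[of L i] label_counts_switch_other[of i L] by (cases "i \<in> {p, Suc p}") (auto simp: A'_def)
    then show "(if ?ok A' (switch L) then 1 else 0 :: real) = (if ?ok A L then 1 else 0)" by simp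
  qed (auto simp: switch_switch switch_labelings pair_connected_switch)
  then show ?thesis unfolding restrict .
qed

lemma sum_disconnected_eq_diff:
  fixes A :: "nat \<Rightarrow> 'a set"
  assumes "A (Suc p) = {}"
  defines "A' \<equiv> A(p := sym_diff (A p) {u, v}, Suc p := {u, v})"
  shows "(\<Sum>L\<in>labelings E K m. if (\<forall>i\<in>{1..K}. sources E (label_counts E K m L i) = A i) \<and> \<not> pair_connected L then 1 else 0 :: real)
       = source_count E K m A - source_count E K m A'"
proof -
  let ?ok = "\<lambda>A L. \<forall>i\<in>{1..K}. sources E (label_counts E K m L i) = A i"
  have connected: "pair_connected L" if "?ok A' L" for L
  proof -
    have "sources E (label_counts E K m L (Suc p)) = {u, v}" using that p_less by (simp add: A'_def)
    then have "curr_connected E (label_counts E K m L (Suc p)) u v"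
      by (rule sources_eq_pair_imp_curr_connected[OF graph _ uv])
    then show ?thesis unfolding pair_connected_def by (rule curr_connected_mono) (simp add: pair_current_def)
  qed
  have "source_count E K m A
     = (\<Sum>L\<in>labelings E K m. (if ?ok A L \<and> pair_connected L then 1 else 0) + (if ?ok A L \<and> \<not> pair_connected L then 1 else 0))"
    unfolding source_count_def by (intro sum.cong) auto
  also have "\<dots> = (\<Sum>L\<in>labelings E K m. if ?ok A' L \<and> pair_connected L then 1 else 0)
      + (\<Sum>L\<in>labelings E K m. if ?ok A L \<and> \<not> pair_connected L then 1 else 0)"
    unfolding sum.distrib sum_connected_switch[of A] using assms(1) by (simp add: A'_def)
  also have "(\<Sum>L\<in>labelings E K m. if ?ok A' L \<and> pair_connected L then 1 else 0) = source_count E K m A'"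
    unfolding source_count_def using connected by (intro sum.cong) auto
  finally show ?thesis by simp
qed

end

section \<open>Exponential sums and unnormalised correlations\<close>

definition exp_combination ::
    "'x set \<Rightarrow> 'a set set \<Rightarrow> ('x \<Rightarrow> real) \<Rightarrow> ('x \<Rightarrow> 'a set \<Rightarrow> real) \<Rightarrow> ('a set \<Rightarrow> real) \<Rightarrow> real" where
  "exp_combination X E c a = (\<lambda>J. \<Sum>x\<in>X. c x * exp (\<Sum>e\<in>E. J e * a x e))"

lemma exp_combination_has_real_derivative:
  assumes fE: "finite E" and e: "e \<in> E"
  shows "((\<lambda>t. exp_combination X E c a (J(e := t))) has_real_derivative
           exp_combination X E (\<lambda>x. c x * a x e) a (J(e := t))) (at t)"
proof -
  define S where "S x = (\<Sum>e'\<in>E - {e}. J e' * a x e')" for x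
  have split: "(\<Sum>e'\<in>E. (J(e := t)) e' * a x e') = t * a x e + S x" for t x
  proof -
    have "(\<Sum>e'\<in>E - {e}. (J(e := t)) e' * a x e') = S x" unfolding S_def by (intro sum.cong) auto
    then show ?thesis by (simp add: sum.remove[OF fE e])
  qed
  have "((\<lambda>t. \<Sum>x\<in>X. c x * exp (t * a x e + S x)) has_real_derivative
           (\<Sum>x\<in>X. c x * (exp (t * a x e + S x) * a x e))) (at t)"
    by (auto intro!: derivative_eq_intros sum.cong simp: mult_ac)
  then show ?thesis unfolding exp_combination_def split by (simp add: mult_ac)
qed

lemma pdJ_exp_combination:
  assumes "finite E" and "e \<in> E"
  shows "pdJ e (exp_combination X E c a) = exp_combination X E (\<lambda>x. c x * a x e) a"
  using DERIV_imp_deriv[OF exp_combination_has_real_derivative[OF assms, of X c a _ "_ e"]]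
  by (auto simp: pdJ_def fun_eq_iff)

lemma mixed_pderiv_exp_combination:
  assumes "finite E" and "set es \<subseteq> E"
  shows "mixed_pderiv es m (exp_combination X E c a)
       = exp_combination X E (\<lambda>x. c x * (\<Prod>e\<leftarrow>es. a x e ^ m e)) a"
  using assms(2)
proof (induction es)
  case (Cons e es)
  have "(pdJ e ^^ n) (exp_combination X E c' a) = exp_combination X E (\<lambda>x. c' x * a x e ^ n) a" for n c'
    using Cons.prems by (induction n) (simp_all add: pdJ_exp_combination[OF assms(1)] mult_ac)
  then show ?case using Cons by (simp add: mult_ac)
qed simp

lemma mixed_pderiv_exp_combination_at_0:
  assumes "finite E" and "set es = E" and "distinct es"
  shows "mixed_pderiv es m (exp_combination X E c a) (\<lambda>_. 0) = (\<Sum>x\<in>X. c x * (\<Prod>e\<in>E. a x e ^ m e))"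
proof -
  have "mixed_pderiv es m (exp_combination X E c a) (\<lambda>_. 0) = (\<Sum>x\<in>X. c x * (\<Prod>e\<leftarrow>es. a x e ^ m e))"
    using mixed_pderiv_exp_combination[OF assms(1), of es m X c a] assms(2) by (simp add: exp_combination_def)
  also have "\<dots> = (\<Sum>x\<in>X. c x * (\<Prod>e\<in>E. a x e ^ m e))"
    using assms(2,3) by (simp add: prod.distinct_set_conv_list[symmetric])
  finally show ?thesis .
qed

lemma sum_exp_combination:
  "(\<lambda>J. \<Sum>i\<in>I. r i * exp_combination X E (c i) a J) = exp_combination X E (\<lambda>x. \<Sum>i\<in>I. r i * c i x) a"
proof
  fix J
  define w where "w x = exp (\<Sum>e\<in>E. J e * a x e)" for x
  have "(\<Sum>i\<in>I. r i * (\<Sum>x\<in>X. c i x * w x)) = (\<Sum>i\<in>I. \<Sum>x\<in>X. r i * c i x * w x)"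
    by (simp add: sum_distrib_left mult.assoc)
  also have "\<dots> = (\<Sum>x\<in>X. \<Sum>i\<in>I. r i * c i x * w x)" by (rule sum.swap)
  also have "\<dots> = (\<Sum>x\<in>X. (\<Sum>i\<in>I. r i * c i x) * w x)" by (simp add: sum_distrib_right)
  finally show "(\<Sum>i\<in>I. r i * exp_combination X E (c i) a J) = exp_combination X E (\<lambda>x. \<Sum>i\<in>I. r i * c i x) a J"
    unfolding exp_combination_def w_def .
qed

definition ising_sum :: "'a set \<Rightarrow> 'a set set \<Rightarrow> 'a set \<Rightarrow> ('a set \<Rightarrow> real) \<Rightarrow> real" where
  "ising_sum V E A J = (\<Sum>\<sigma>\<in>configs V. spin A \<sigma> * ising_weight E J \<sigma>)"

lemma ising_sum_eq_exp_combination: "ising_sum V E A = exp_combination (configs V) E (spin A) (\<lambda>\<sigma> e. spin e \<sigma>)"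
  by (simp add: fun_eq_iff ising_sum_def exp_combination_def ising_weight_def spin_def)

lemma Zfun_eq_ising_sum: "Zfun V E = ising_sum V E {}"
  by (simp add: fun_eq_iff Zfun_def ising_sum_def spin_def)

lemma ising_expect_spin: "ising_expect V E (spin A) J = ising_sum V E A J / Zfun V E J"
  by (simp add: ising_expect_def ising_sum_def)

lemma Zfun_pos:
  assumes "finite V"
  shows "Zfun V E J > 0"
proof -
  have "restrict (\<lambda>_. 1) V \<in> configs V" by (auto simp: configs_def)
  then show ?thesis
    using finite_configs[OF assms] unfolding Zfun_def ising_weight_def by (intro sum_pos) auto
qed

lemma spin_mult_sym_diff:
  assumes \<sigma>: "\<sigma> \<in> configs V" and "finite V" "A \<subseteq> V" "B \<subseteq> V"
  shows "spin A \<sigma> * spin B \<sigma> = spin (sym_diff A B) \<sigma>"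
proof -
  have fin: "finite A" "finite B" using assms finite_subset by auto
  have "spin (A \<inter> B) \<sigma> * spin (A \<inter> B) \<sigma> = (\<Prod>x\<in>A \<inter> B. \<sigma> x * \<sigma> x)"
    by (simp add: spin_def prod.distrib)
  also have "\<dots> = 1"
    using \<sigma> assms(3) by (intro prod.neutral) (auto simp: configs_def PiE_def Pi_def)
  finally have "spin (A \<inter> B) \<sigma> * spin (A \<inter> B) \<sigma> = 1" .
  moreover have "spin A \<sigma> = spin (A \<inter> B) \<sigma> * spin (A - B) \<sigma>"
    unfolding spin_def by (rule prod.Int_Diff[OF fin(1)])
  moreover have "spin B \<sigma> = spin (A \<inter> B) \<sigma> * spin (B - A) \<sigma>"
    unfolding spin_def using prod.Int_Diff[OF fin(2), of \<sigma> A] by (simp add: Int_commute)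
  moreover have "spin (sym_diff A B) \<sigma> = spin (A - B) \<sigma> * spin (B - A) \<sigma>"
    unfolding spin_def by (rule prod.union_disjoint) (use fin in auto)
  ultimately show ?thesis by (simp add: algebra_simps)
qed

lemma ising_sum_has_real_derivative:
  assumes G: "simple_graph V E" and e: "e \<in> E" and A: "A \<subseteq> V"
  shows "((\<lambda>t. ising_sum V E A (J(e := t))) has_real_derivative ising_sum V E (sym_diff A e) (J(e := t))) (at t)"
proof -
  have eq: "exp_combination (configs V) E (\<lambda>\<sigma>. spin A \<sigma> * spin e \<sigma>) (\<lambda>\<sigma> e. spin e \<sigma>)
      = exp_combination (configs V) E (spin (sym_diff A e)) (\<lambda>\<sigma> e. spin e \<sigma>)"
    using spin_mult_sym_diff[of _ V A e] G A simple_graph_edge_subset[OF G e]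
    unfolding exp_combination_def by (intro ext sum.cong) (auto simp: simple_graph_def)
  have "((\<lambda>t. exp_combination (configs V) E (spin A) (\<lambda>\<sigma> e. spin e \<sigma>) (J(e := t))) has_real_derivative
          exp_combination (configs V) E (\<lambda>\<sigma>. spin A \<sigma> * spin e \<sigma>) (\<lambda>\<sigma> e. spin e \<sigma>) (J(e := t))) (at t)"
    by (rule exp_combination_has_real_derivative[OF simple_graph_finite_edges[OF G] e])
  then show ?thesis unfolding ising_sum_eq_exp_combination eq .
qed

lemma prod_ising_sum_eq_exp_combination:
  assumes "finite V" and "finite I"
  shows "(\<Prod>i\<in>I. ising_sum V E (A i) J)
       = exp_combination (I \<rightarrow>\<^sub>E configs V) E (\<lambda>\<sigma>s. \<Prod>i\<in>I. spin (A i) (\<sigma>s i)) (\<lambda>\<sigma>s e. \<Sum>i\<in>I. spin e (\<sigma>s i)) J"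
proof -
  have "(\<Prod>i\<in>I. ising_sum V E (A i) J)
      = (\<Sum>\<sigma>s\<in>I \<rightarrow>\<^sub>E configs V. \<Prod>i\<in>I. spin (A i) (\<sigma>s i) * ising_weight E J (\<sigma>s i))"
    unfolding ising_sum_def by (rule prod_sum_PiE) (use assms finite_configs in auto)
  also have "\<dots> = exp_combination (I \<rightarrow>\<^sub>E configs V) E (\<lambda>\<sigma>s. \<Prod>i\<in>I. spin (A i) (\<sigma>s i)) (\<lambda>\<sigma>s e. \<Sum>i\<in>I. spin e (\<sigma>s i)) J"
    unfolding exp_combination_def
  proof (intro sum.cong refl)
    fix \<sigma>s :: "'b \<Rightarrow> 'a \<Rightarrow> real"
    have "(\<Prod>i\<in>I. ising_weight E J (\<sigma>s i)) = exp (\<Sum>i\<in>I. \<Sum>e\<in>E. J e * spin e (\<sigma>s i))"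
      unfolding ising_weight_def spin_def by (simp add: exp_sum assms(2))
    also have "(\<Sum>i\<in>I. \<Sum>e\<in>E. J e * spin e (\<sigma>s i)) = (\<Sum>e\<in>E. J e * (\<Sum>i\<in>I. spin e (\<sigma>s i)))"
      by (simp add: sum.swap[of _ I] sum_distrib_left)
    finally show "(\<Prod>i\<in>I. spin (A i) (\<sigma>s i) * ising_weight E J (\<sigma>s i)) =
        (\<Prod>i\<in>I. spin (A i) (\<sigma>s i)) * exp (\<Sum>e\<in>E. J e * (\<Sum>i\<in>I. spin e (\<sigma>s i)))"
      by (simp add: prod.distrib)
  qed
  finally show ?thesis .
qed

definition flip_spins :: "'a set \<Rightarrow> ('a \<Rightarrow> real) \<Rightarrow> 'a \<Rightarrow> real" where
  "flip_spins V \<sigma> = restrict (\<lambda>x. - \<sigma> x) V"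

lemma flip_spins_configs: "\<sigma> \<in> configs V \<Longrightarrow> flip_spins V \<sigma> \<in> configs V"
  by (auto simp: configs_def flip_spins_def PiE_def Pi_def)

lemma flip_spins_flip_spins: "\<sigma> \<in> configs V \<Longrightarrow> flip_spins V (flip_spins V \<sigma>) = \<sigma>"
  by (auto simp: configs_def flip_spins_def PiE_def extensional_def fun_eq_iff)

lemma ising_weight_flip_spins:
  assumes G: "simple_graph V E"
  shows "ising_weight E J (flip_spins V \<sigma>) = ising_weight E J \<sigma>"
proof -
  have "(\<Prod>x\<in>e. flip_spins V \<sigma> x) = (\<Prod>x\<in>e. \<sigma> x)" if e: "e \<in> E" for e
  proof -
    obtain x y where "e = {x, y}" "x \<in> V" "y \<in> V" "x \<noteq> y" using G e by (auto simp: simple_graph_def)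
    then show ?thesis by (simp add: flip_spins_def)
  qed
  then show ?thesis
    unfolding ising_weight_def by (intro arg_cong[where f = exp] sum.cong refl) simp_all
qed

lemma ising_sum_odd:
  assumes G: "simple_graph V E" and A: "A \<subseteq> V" and odd: "odd (card A)"
  shows "ising_sum V E A J = 0"
proof -
  have "spin A (flip_spins V \<sigma>) = (\<Prod>x\<in>A. - \<sigma> x)" for \<sigma>
    unfolding spin_def flip_spins_def using A by (intro prod.cong) auto
  then have flip_A: "spin A (flip_spins V \<sigma>) = - spin A \<sigma>" for \<sigma>
    using odd by (simp add: prod_uminus spin_def)
  have "ising_sum V E A J = (\<Sum>\<sigma>\<in>configs V. spin A (flip_spins V \<sigma>) * ising_weight E J (flip_spins V \<sigma>))"
    unfolding ising_sum_def
    by (rule sum.reindex_bij_witness[where i = "flip_spins V" and j = "flip_spins V"])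
       (auto simp: flip_spins_flip_spins flip_spins_configs)
  also have "\<dots> = - ising_sum V E A J"
    unfolding ising_sum_def flip_A ising_weight_flip_spins[OF G] by (simp add: sum_negf)
  finally show ?thesis by simp
qed

section \<open>The Ursell function as a sum over even partitions\<close>

definition even_partitions :: "'b set \<Rightarrow> 'b set set set" where
  "even_partitions S = {P. partition_on S P \<and> (\<forall>B\<in>P. even (card B))}"

definition ursell_coeff :: "'b set \<Rightarrow> real" where
  "ursell_coeff P = (-1) ^ (card P - 1) * fact (card P - 1)"

lemma finite_even_partitions: "finite S \<Longrightarrow> finite (even_partitions S)"
  unfolding even_partitions_def by (rule finite_subset[OF _ finitely_many_partition_on]) auto

lemma finite_even_partition: "finite S \<Longrightarrow> P \<in> even_partitions S \<Longrightarrow> finite P"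
  by (auto simp: even_partitions_def intro: finite_elements)

lemma card_even_partition_le:
  assumes "finite S" and P: "P \<in> even_partitions S"
  shows "2 * card P \<le> card S"
proof -
  have part: "partition_on S P" and ev: "\<forall>B\<in>P. even (card B)" using P by (auto simp: even_partitions_def)
  have fin: "finite B" if "B \<in> P" for B
    using assms(1) partition_onD1[OF part] that by (auto intro: finite_subset)
  have "card B \<ge> 2" if "B \<in> P" for B
  proof -
    have "B \<noteq> {}" using partition_onD3[OF part] that by auto
    then have "card B \<noteq> 0" using fin[OF that] by simp
    moreover have "even (card B)" using ev that by blast
    ultimately show ?thesis by presburger
  qed
  then have "card P * 2 \<le> sum card P" using sum_bounded_below[of P 2 card] by simp
  also have "sum card P = card (\<Union>P)"
    using part fin by (intro card_Union_disjoint[symmetric]) (auto simp: partition_on_def disjoint_def pairwise_def disjnt_def)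
  finally show ?thesis using partition_onD1[OF part] by simp
qed

lemma partition_on_preimage:
  assumes part: "partition_on (j ` S) P"
  shows "partition_on S ((\<lambda>B. {i \<in> S. j i \<in> B}) ` P)"
proof (rule partition_onI)
  show "\<Union>((\<lambda>B. {i \<in> S. j i \<in> B}) ` P) = S" using partition_onD1[OF part] by auto
  show "{} \<notin> (\<lambda>B. {i \<in> S. j i \<in> B}) ` P"
  proof
    assume "{} \<in> (\<lambda>B. {i \<in> S. j i \<in> B}) ` P"
    then obtain B where B: "B \<in> P" "{i \<in> S. j i \<in> B} = {}" by auto
    moreover have "B \<noteq> {}" using partition_onD3[OF part] B by auto
    moreover have "B \<subseteq> j ` S" using partition_onD1[OF part] B(1) by auto
    ultimately show False by auto
  qed
  fix B1 B2 assume "B1 \<in> (\<lambda>B. {i \<in> S. j i \<in> B}) ` P" "B2 \<in> (\<lambda>B. {i \<in> S. j i \<in> B}) ` P" "B1 \<noteq> B2"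
  then show "disjnt B1 B2"
    using partition_onD2[OF part] by (auto simp: disjoint_def disjnt_def)
qed

lemma bij_betw_image_even_partitions:
  assumes j: "inj_on j S"
  shows "bij_betw ((`) ((`) j)) (even_partitions S) (even_partitions (j ` S))"
proof (rule bij_betw_byWitness[where f' = "(`) (\<lambda>B. {i \<in> S. j i \<in> B})"])
  have sub: "B \<subseteq> S" if "P \<in> even_partitions S" "B \<in> P" for P B
    using that partition_onD1 by (fastforce simp: even_partitions_def)
  have sub': "B \<subseteq> j ` S" if "P \<in> even_partitions (j ` S)" "B \<in> P" for P B
    using that partition_onD1 by (fastforce simp: even_partitions_def)
  have card_pre: "card {i \<in> S. j i \<in> B} = card B" if "B \<subseteq> j ` S" for B
  proof -
    have "j ` {i \<in> S. j i \<in> B} = B" using that by auto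
    then show ?thesis using j by (metis (no_types, lifting) card_image inj_on_subset mem_Collect_eq subsetI)
  qed
  show "\<forall>P\<in>even_partitions S. (`) (\<lambda>B. {i \<in> S. j i \<in> B}) ((`) j ` P) = P"
  proof
    fix P assume P: "P \<in> even_partitions S"
    have "{i \<in> S. j i \<in> j ` B} = B" if "B \<in> P" for B
      using sub[OF P that] j by (auto dest: inj_onD)
    then show "(`) (\<lambda>B. {i \<in> S. j i \<in> B}) ((`) j ` P) = P" by (simp add: image_image)
  qed
  show "\<forall>P\<in>even_partitions (j ` S). (`) j ` (\<lambda>B. {i \<in> S. j i \<in> B}) ` P = P"
  proof
    fix P assume P: "P \<in> even_partitions (j ` S)"
    have "j ` {i \<in> S. j i \<in> B} = B" if "B \<in> P" for B using sub'[OF P that] by auto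
    then show "(`) j ` (\<lambda>B. {i \<in> S. j i \<in> B}) ` P = P" by (simp add: image_image)
  qed
  show "(`) ((`) j) ` even_partitions S \<subseteq> even_partitions (j ` S)"
  proof clarify
    fix P assume P: "P \<in> even_partitions S"
    then have part: "partition_on S P" by (simp add: even_partitions_def)
    have "(`) j ` P - {{}} = (`) j ` P" using partition_onD3[OF part] by auto
    then have "partition_on (j ` S) ((`) j ` P)" using partition_on_inj_image[OF part j] by simp
    moreover have "card (j ` B) = card B" if "B \<in> P" for B
      using sub[OF P that] j by (metis card_image inj_on_subset)
    ultimately show "(`) j ` P \<in> even_partitions (j ` S)" using P by (auto simp: even_partitions_def)
  qed
  show "(`) (\<lambda>B. {i \<in> S. j i \<in> B}) ` even_partitions (j ` S) \<subseteq> even_partitions S"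
  proof clarify
    fix P assume P: "P \<in> even_partitions (j ` S)"
    then have part: "partition_on (j ` S) P" by (simp add: even_partitions_def)
    have "partition_on S ((\<lambda>B. {i \<in> S. j i \<in> B}) ` P)" by (rule partition_on_preimage[OF part])
    then show "(\<lambda>B. {i \<in> S. j i \<in> B}) ` P \<in> even_partitions S"
      using P card_pre sub'[OF P] by (auto simp: even_partitions_def)
  qed
qed

lemma ursell_eq_sum_even_partitions:
  assumes G: "simple_graph V E" and j: "inj_on j {1..n}" and jV: "j ` {1..n} \<subseteq> V"
  shows "ursell V E n j J = (\<Sum>P\<in>even_partitions (j ` {1..n}).
           ursell_coeff P * (\<Prod>B\<in>P. ising_sum V E B J / Zfun V E J))"
proof -
  let ?r = "\<lambda>B. ising_sum V E B J / Zfun V E J"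
  let ?t = "\<lambda>P. ursell_coeff P * (\<Prod>B\<in>P. ?r (j ` B))"
  have block_subset: "B \<subseteq> {1..n}" if "partition_on {1..n} P" "B \<in> P" for P B
    using partition_onD1[OF that(1)] that(2) by auto
  have "ursell V E n j J = (\<Sum>P\<in>{P. partition_on {1..n} P}. ?t P)"
    unfolding ursell_def ursell_coeff_def
  proof (intro sum.cong refl arg_cong2[where f = "(*)"] prod.cong)
    fix P B assume "P \<in> {P. partition_on {1..n} P}" "B \<in> P"
    then have "inj_on j B" using j block_subset by (auto intro: inj_on_subset)
    then have "(\<lambda>\<sigma>. \<Prod>i\<in>B. \<sigma> (j i)) = spin (j ` B)" by (auto simp: spin_def prod.reindex fun_eq_iff)
    then show "ising_expect V E (\<lambda>\<sigma>. \<Prod>i\<in>B. \<sigma> (j i)) J = ?r (j ` B)"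
      by (simp add: ising_expect_spin)
  qed
  also have "\<dots> = (\<Sum>P\<in>even_partitions {1..n}. ?t P)"
  proof (rule sum.mono_neutral_right)
    show "\<forall>P\<in>{P. partition_on {1..n} P} - even_partitions {1..n}. ?t P = 0"
    proof
      fix P assume "P \<in> {P. partition_on {1..n} P} - even_partitions {1..n}"
      then obtain B where P: "partition_on {1..n} P" and B: "B \<in> P" "odd (card B)"
        by (auto simp: even_partitions_def)
      have "card (j ` B) = card B" using j block_subset[OF P B(1)] by (metis card_image inj_on_subset)
      then have "ising_sum V E (j ` B) J = 0"
        using B jV block_subset[OF P B(1)] by (intro ising_sum_odd[OF G]) auto
      then show "?t P = 0" using P B finite_elements[OF _ P] by (auto intro: prod_zero)
    qed
  qed (auto simp: even_partitions_def intro: finitely_many_partition_on)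
  also have "\<dots> = (\<Sum>P\<in>even_partitions {1..n}. ursell_coeff ((`) j ` P) * (\<Prod>B\<in>(`) j ` P. ?r B))"
  proof (intro sum.cong refl)
    fix P assume P: "P \<in> even_partitions {1..n}"
    have "inj_on ((`) j) P"
    proof (rule inj_onI)
      fix B1 B2 assume "B1 \<in> P" "B2 \<in> P" "j ` B1 = j ` B2"
      moreover have "B1 \<subseteq> {1..n}" "B2 \<subseteq> {1..n}"
        using P block_subset \<open>B1 \<in> P\<close> \<open>B2 \<in> P\<close> by (auto simp: even_partitions_def)
      ultimately show "B1 = B2" using j by (metis inj_on_image_eq_iff)
    qed
    then show "?t P = ursell_coeff ((`) j ` P) * (\<Prod>B\<in>(`) j ` P. ?r B)"
      by (simp add: ursell_coeff_def card_image prod.reindex)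
  qed
  also have "\<dots> = (\<Sum>P\<in>even_partitions (j ` {1..n}). ursell_coeff P * (\<Prod>B\<in>P. ?r B))"
    by (rule sum.reindex_bij_betw[OF bij_betw_image_even_partitions[OF j]])
  finally show ?thesis .
qed

lemma pdJ_ursell:
  assumes G: "simple_graph V E" and e: "e \<in> E" and j: "inj_on j {1..n}" and jV: "j ` {1..n} \<subseteq> V"
  shows "pdJ e (ursell V E n j) J = (\<Sum>P\<in>even_partitions (j ` {1..n}). ursell_coeff P *
           (\<Sum>Q\<in>P. (ising_sum V E (sym_diff Q e) J * Zfun V E J - ising_sum V E Q J * ising_sum V E e J)
                     / (Zfun V E J * Zfun V E J)
                   * (\<Prod>B\<in>P - {Q}. ising_sum V E B J / Zfun V E J)))"
proof -
  define r where "r B t = ising_sum V E B (J(e := t)) / Zfun V E (J(e := t))" for B t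
  have Z_nonzero: "Zfun V E J' \<noteq> 0" for J'
    using Zfun_pos[of V E J'] G by (simp add: simple_graph_def)
  have block_subset: "B \<subseteq> V" if "P \<in> even_partitions (j ` {1..n})" "B \<in> P" for P B
    using that jV partition_onD1 by (fastforce simp: even_partitions_def)
  have Z_deriv: "((\<lambda>t. Zfun V E (J(e := t))) has_real_derivative ising_sum V E e (J(e := t))) (at t)" for t
    using ising_sum_has_real_derivative[OF G e, of "{}"] by (simp add: Zfun_eq_ising_sum)
  have r_deriv: "(r B has_real_derivative
      (ising_sum V E (sym_diff B e) (J(e := t)) * Zfun V E (J(e := t)) - ising_sum V E B (J(e := t)) * ising_sum V E e (J(e := t)))
      / (Zfun V E (J(e := t)) * Zfun V E (J(e := t)))) (at t)" if "B \<subseteq> V" for B t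
    unfolding r_def by (intro DERIV_divide ising_sum_has_real_derivative[OF G e that] Z_deriv Z_nonzero)
  have "ursell V E n j \<circ> (\<lambda>t. J(e := t)) = (\<lambda>t. \<Sum>P\<in>even_partitions (j ` {1..n}). ursell_coeff P * (\<Prod>B\<in>P. r B t))"
    unfolding r_def by (simp add: fun_eq_iff ursell_eq_sum_even_partitions[OF G j jV])
  moreover have "((\<lambda>t. \<Sum>P\<in>even_partitions (j ` {1..n}). ursell_coeff P * (\<Prod>B\<in>P. r B t)) has_real_derivative
     (\<Sum>P\<in>even_partitions (j ` {1..n}). ursell_coeff P *
       (\<Sum>Q\<in>P. (ising_sum V E (sym_diff Q e) J * Zfun V E J - ising_sum V E Q J * ising_sum V E e J)
                 / (Zfun V E J * Zfun V E J) * (\<Prod>B\<in>P - {Q}. r B (J e))))) (at (J e))"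
    using block_subset
    by (intro DERIV_sum DERIV_cmult has_field_derivative_prod) (auto intro!: r_deriv[where t = "J e", simplified])
  ultimately show ?thesis
    unfolding pdJ_def by (auto simp: r_def comp_def dest!: DERIV_imp_deriv)
qed

section \<open>Replica products and the coefficients \<open>R\<close>\<close>

definition other_blocks :: "'a set set \<Rightarrow> 'a set \<Rightarrow> nat \<Rightarrow> 'a set" where
  "other_blocks P Q = (SOME f. bij_betw f {1..<card P} (P - {Q}))"

text \<open>Source sets of the \<open>k + 1\<close> currents counted by \<open>R(m, P, Q)\<close>, and of the currents obtained from them
  by the switching lemma, which moves \<open>{u, v}\<close> from current \<open>|P|\<close> to current \<open>|P| + 1\<close>.\<close>

definition replica_sources :: "'a \<Rightarrow> 'a \<Rightarrow> 'a set set \<Rightarrow> 'a set \<Rightarrow> nat \<Rightarrow> 'a set" where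
  "replica_sources u v P Q i =
     (if i < card P then other_blocks P Q i else if i = card P then sym_diff Q {u, v} else {})"

definition switched_sources :: "'a \<Rightarrow> 'a \<Rightarrow> 'a set set \<Rightarrow> 'a set \<Rightarrow> nat \<Rightarrow> 'a set" where
  "switched_sources u v P Q i =
     (if i < card P then other_blocks P Q i else if i = card P then Q
      else if i = Suc (card P) then {u, v} else {})"

lemma bij_betw_other_blocks:
  assumes "finite P" "Q \<in> P"
  shows "bij_betw (other_blocks P Q) {1..<card P} (P - {Q})"
proof -
  have "\<exists>f. bij_betw f {1..<card P} (P - {Q})"
    using assms by (intro finite_same_card_bij) auto
  then show ?thesis unfolding other_blocks_def by (rule someI_ex)
qed

lemma replica_sources_subset:
  assumes "finite P" "Q \<in> P" "\<And>B. B \<in> P \<Longrightarrow> B \<subseteq> V" "{u, v} \<subseteq> V" "1 \<le> i"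
  shows "replica_sources u v P Q i \<subseteq> V" "switched_sources u v P Q i \<subseteq> V"
proof -
  have "other_blocks P Q i \<subseteq> V" if "i < card P"
    using bij_betwE[OF bij_betw_other_blocks[OF assms(1,2)]] assms(3,5) that by auto
  then show "replica_sources u v P Q i \<subseteq> V" "switched_sources u v P Q i \<subseteq> V"
    using assms(2-4) by (auto simp: replica_sources_def switched_sources_def)
qed

lemma prod_split_at_pair:
  fixes g :: "nat \<Rightarrow> 'b::comm_monoid_mult"
  assumes "1 \<le> p" "p \<le> k"
  shows "(\<Prod>i=1..k+1. g i) = (\<Prod>i\<in>{1..<p}. g i) * g p * g (Suc p) * (\<Prod>i\<in>{p+2..k+1}. g i)"
proof -
  have "{1..k+1} = {1..<p} \<union> ({p} \<union> ({Suc p} \<union> {p+2..k+1}))" using assms by auto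
  then have "(\<Prod>i=1..k+1. g i) = (\<Prod>i\<in>{1..<p} \<union> ({p} \<union> ({Suc p} \<union> {p+2..k+1})). g i)" by simp
  also have "\<dots> = (\<Prod>i\<in>{1..<p}. g i) * (g p * (g (Suc p) * (\<Prod>i\<in>{p+2..k+1}. g i)))"
  proof -
    have d1: "{1..<p} \<inter> ({p} \<union> ({Suc p} \<union> {p+2..k+1})) = {}"
      and d2: "{p} \<inter> ({Suc p} \<union> {p+2..k+1}) = {}" and d3: "{Suc p} \<inter> {p+2..k+1} = {}"
      by auto
    show ?thesis
      by (subst prod.union_disjoint[OF _ _ d1], simp, simp, subst prod.union_disjoint[OF _ _ d2], simp, simp,
          subst prod.union_disjoint[OF _ _ d3], simp, simp, simp)
  qed
  finally show ?thesis by (simp add: mult_ac)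
qed

lemma prod_replica_sources:
  assumes "finite P" "Q \<in> P" "card P \<le> k"
  shows "(\<Prod>i=1..k+1. W (replica_sources u v P Q i)) = (\<Prod>B\<in>P - {Q}. W B) * W (sym_diff Q {u, v}) * W {} ^ (k + 1 - card P)"
proof -
  let ?p = "card P"
  have p_pos: "1 \<le> ?p" using assms(1,2) by (metis One_nat_def Suc_leI card_gt_0_iff empty_iff)
  have "(\<Prod>i\<in>{1..<?p}. W (replica_sources u v P Q i)) = (\<Prod>i\<in>{1..<?p}. W (other_blocks P Q i))"
    by (intro prod.cong) (auto simp: replica_sources_def)
  also have "\<dots> = (\<Prod>B\<in>P - {Q}. W B)"
    by (rule prod.reindex_bij_betw[OF bij_betw_other_blocks[OF assms(1,2)]])
  moreover have "(\<Prod>i\<in>{?p+2..k+1}. W (replica_sources u v P Q i)) = W {} ^ (k - ?p)"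
    using assms(3) by (simp add: replica_sources_def)
  moreover have "k + 1 - ?p = Suc (k - ?p)" using assms(3) by simp
  ultimately show ?thesis
    unfolding prod_split_at_pair[OF p_pos assms(3)] by (simp add: replica_sources_def mult_ac)
qed

lemma prod_switched_sources:
  assumes "finite P" "Q \<in> P" "card P \<le> k"
  shows "(\<Prod>i=1..k+1. W (switched_sources u v P Q i)) = (\<Prod>B\<in>P - {Q}. W B) * W Q * W {u, v} * W {} ^ (k - card P)"
proof -
  let ?p = "card P"
  have p_pos: "1 \<le> ?p" using assms(1,2) by (metis One_nat_def Suc_leI card_gt_0_iff empty_iff)
  have "(\<Prod>i\<in>{1..<?p}. W (switched_sources u v P Q i)) = (\<Prod>i\<in>{1..<?p}. W (other_blocks P Q i))"
    by (intro prod.cong) (auto simp: switched_sources_def)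
  also have "\<dots> = (\<Prod>B\<in>P - {Q}. W B)"
    by (rule prod.reindex_bij_betw[OF bij_betw_other_blocks[OF assms(1,2)]])
  moreover have "(\<Prod>i\<in>{?p+2..k+1}. W (switched_sources u v P Q i)) = W {} ^ (k - ?p)"
    using assms(3) by (simp add: switched_sources_def)
  ultimately show ?thesis
    unfolding prod_split_at_pair[OF p_pos assms(3)] by (simp add: switched_sources_def)
qed

text \<open>Rescaled by \<open>Z\<^sup>k\<^sup>+\<^sup>1\<close>, the derivative of one block term becomes a difference of products of
  \<open>k + 1\<close> unnormalised correlations, the missing factors being \<open>Z = ising_sum V E {}\<close>.\<close>

lemma scaled_block_derivative_eq_replica_products:
  fixes V :: "'a set" and E :: "'a set set" and J :: "'a set \<Rightarrow> real" and c :: real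
  assumes "finite V" "finite P" "Q \<in> P" "card P \<le> k" "c \<noteq> 0"
  defines "W \<equiv> \<lambda>A. ising_sum V E A J" and "Z \<equiv> Zfun V E J"
  shows "(Z / c) ^ (k + 1) * ((W (sym_diff Q {u, v}) * Z - W Q * W {u, v}) / (Z * Z) * (\<Prod>B\<in>P - {Q}. W B / Z))
       = ((\<Prod>i=1..k+1. W (replica_sources u v P Q i)) - (\<Prod>i=1..k+1. W (switched_sources u v P Q i))) / c ^ (k + 1)"
proof -
  let ?p = "card P"
  have p_pos: "1 \<le> ?p" using assms(2,3) by (metis One_nat_def Suc_leI card_gt_0_iff empty_iff)
  have Z: "Z \<noteq> 0" "W {} = Z"
    using Zfun_pos[OF assms(1), of E J] by (simp_all add: W_def Z_def Zfun_eq_ising_sum)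
  have "(\<Prod>B\<in>P - {Q}. W B / Z) = (\<Prod>B\<in>P - {Q}. W B) / Z ^ (?p - 1)"
    using assms(2,3) by (simp add: prod_dividef)
  moreover have "Z ^ (k + 1) = Z * Z * Z ^ (?p - 1) * Z ^ (k - ?p)"
  proof -
    have "k + 1 = Suc (Suc ((?p - 1) + (k - ?p)))" using p_pos assms(4) by arith
    then show ?thesis by (simp only: power_Suc power_add mult.assoc)
  qed
  moreover have "Z ^ (k + 1 - ?p) = Z * Z ^ (k - ?p)" using assms(4) by (simp add: Suc_diff_le)
  ultimately show ?thesis
    unfolding prod_replica_sources[OF assms(2-4)] prod_switched_sources[OF assms(2-4)] Z(2) power_divide
    using Z(1) assms(5) by (simp add: field_simps)
qed

lemma scaled_pdJ_ursell:
  assumes G: "simple_graph V E" and e: "{u, v} \<in> E" and j: "inj_on j {1..2*k}" and jV: "j ` {1..2*k} \<subseteq> V"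
  shows "(Zfun V E J / 2 ^ card V) ^ (k + 1) * pdJ {u, v} (ursell V E (2*k) j) J
       = (\<Sum>P\<in>even_partitions (j ` {1..2*k}). \<Sum>Q\<in>P. ursell_coeff P / 2 ^ (card V * (k + 1)) *
            ((\<Prod>i=1..k+1. ising_sum V E (replica_sources u v P Q i) J)
             - (\<Prod>i=1..k+1. ising_sum V E (switched_sources u v P Q i) J)))"
  unfolding pdJ_ursell[OF G e j jV] sum_distrib_left
proof (intro sum.cong refl)
  fix P Q assume P: "P \<in> even_partitions (j ` {1..2*k})" and Q: "Q \<in> P"
  have "finite P" by (rule finite_even_partition[OF _ P]) simp
  moreover have "card P \<le> k"
    using card_even_partition_le[OF _ P] card_image[OF j] by simp
  ultimately have scaled: "(Zfun V E J / 2 ^ card V) ^ (k + 1) *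
      ((ising_sum V E (sym_diff Q {u, v}) J * Zfun V E J - ising_sum V E Q J * ising_sum V E {u, v} J)
        / (Zfun V E J * Zfun V E J) * (\<Prod>B\<in>P - {Q}. ising_sum V E B J / Zfun V E J))
    = ((\<Prod>i=1..k+1. ising_sum V E (replica_sources u v P Q i) J)
       - (\<Prod>i=1..k+1. ising_sum V E (switched_sources u v P Q i) J)) / (2 ^ card V) ^ (k + 1)"
    using G Q by (intro scaled_block_derivative_eq_replica_products) (auto simp: simple_graph_def)
  show "(Zfun V E J / 2 ^ card V) ^ (k + 1) * (ursell_coeff P *
      ((ising_sum V E (sym_diff Q {u, v}) J * Zfun V E J - ising_sum V E Q J * ising_sum V E {u, v} J)
        / (Zfun V E J * Zfun V E J) * (\<Prod>B\<in>P - {Q}. ising_sum V E B J / Zfun V E J)))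
    = ursell_coeff P / 2 ^ (card V * (k + 1)) *
      ((\<Prod>i=1..k+1. ising_sum V E (replica_sources u v P Q i) J)
       - (\<Prod>i=1..k+1. ising_sum V E (switched_sources u v P Q i) J))"
    by (simp only: mult.left_commute[of _ "ursell_coeff P"] scaled power_mult) simp
qed

lemma mixed_pderiv_replica_products_at_0:
  assumes G: "simple_graph V E" and es: "set es = E" "distinct es" and I: "finite I"
    and AB: "\<And>x i. x \<in> I \<Longrightarrow> i \<in> {1..K} \<Longrightarrow> A x i \<subseteq> V \<and> B x i \<subseteq> V"
  shows "mixed_pderiv es m
           (\<lambda>J. \<Sum>x\<in>I. r x * ((\<Prod>i=1..K. ising_sum V E (A x i) J) - (\<Prod>i=1..K. ising_sum V E (B x i) J)))
           (\<lambda>_. 0)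
       = 2 ^ (card V * K) * (\<Sum>x\<in>I. r x * (source_count E K m (A x) - source_count E K m (B x)))"
proof -
  have fV: "finite V" using G by (simp add: simple_graph_def)
  let ?X = "{1..K} \<rightarrow>\<^sub>E configs V"
  let ?a = "\<lambda>\<sigma>s e. \<Sum>i=1..K. spin e (\<sigma>s i)"
  let ?c = "\<lambda>A \<sigma>s. \<Prod>i=1..K. spin (A i) (\<sigma>s i)"
  let ?s = "\<lambda>A. \<Sum>\<sigma>s\<in>?X. ?c A \<sigma>s * (\<Prod>e\<in>E. ?a \<sigma>s e ^ m e)"
  have "(\<Prod>i=1..K. ising_sum V E (A x i) J) - (\<Prod>i=1..K. ising_sum V E (B x i) J)
      = exp_combination ?X E (\<lambda>\<sigma>s. ?c (A x) \<sigma>s - ?c (B x) \<sigma>s) ?a J" for x J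
    unfolding prod_ising_sum_eq_exp_combination[OF fV finite_atLeastAtMost]
    by (simp add: exp_combination_def sum_subtractf left_diff_distrib)
  then have "mixed_pderiv es m
           (\<lambda>J. \<Sum>x\<in>I. r x * ((\<Prod>i=1..K. ising_sum V E (A x i) J) - (\<Prod>i=1..K. ising_sum V E (B x i) J)))
           (\<lambda>_. 0)
      = (\<Sum>\<sigma>s\<in>?X. (\<Sum>x\<in>I. r x * (?c (A x) \<sigma>s - ?c (B x) \<sigma>s)) * (\<Prod>e\<in>E. ?a \<sigma>s e ^ m e))"
    by (simp add: sum_exp_combination mixed_pderiv_exp_combination_at_0[OF simple_graph_finite_edges[OF G] es])
  also have "\<dots> = (\<Sum>\<sigma>s\<in>?X. \<Sum>x\<in>I. r x * (?c (A x) \<sigma>s - ?c (B x) \<sigma>s) * (\<Prod>e\<in>E. ?a \<sigma>s e ^ m e))"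
    by (simp add: sum_distrib_right)
  also have "\<dots> = (\<Sum>x\<in>I. \<Sum>\<sigma>s\<in>?X. r x * (?c (A x) \<sigma>s - ?c (B x) \<sigma>s) * (\<Prod>e\<in>E. ?a \<sigma>s e ^ m e))"
    by (rule sum.swap)
  also have "\<dots> = (\<Sum>x\<in>I. r x * (?s (A x) - ?s (B x)))"
    by (simp add: sum_distrib_left sum_subtractf algebra_simps)
  also have "\<dots> = (\<Sum>x\<in>I. r x * (2 ^ (card V * K) * source_count E K m (A x)
                                 - 2 ^ (card V * K) * source_count E K m (B x)))"
  proof (intro sum.cong refl)
    fix x assume x: "x \<in> I"
    have "?s (A x) = 2 ^ (card V * K) * source_count E K m (A x)"
      by (rule sum_replica_configs_eq_source_count[OF G]) (use AB[OF x] in auto)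
    moreover have "?s (B x) = 2 ^ (card V * K) * source_count E K m (B x)"
      by (rule sum_replica_configs_eq_source_count[OF G]) (use AB[OF x] in auto)
    ultimately show "r x * (?s (A x) - ?s (B x)) = r x * (2 ^ (card V * K) * source_count E K m (A x)
                                 - 2 ^ (card V * K) * source_count E K m (B x))" by simp
  qed
  also have "\<dots> = 2 ^ (card V * K) * (\<Sum>x\<in>I. r x * (source_count E K m (A x) - source_count E K m (B x)))"
    by (simp add: sum_distrib_left algebra_simps)
  finally show ?thesis .
qed

lemma R_PQ_eq_source_count_diff:
  assumes G: "simple_graph V E" and e: "{u, v} \<in> E" and P: "finite P" "Q \<in> P" "card P \<le> k"
  shows "R_PQ E k u v m P Q
       = source_count E (k + 1) m (replica_sources u v P Q) - source_count E (k + 1) m (switched_sources u v P Q)"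
proof -
  let ?p = "card P"
  have p_pos: "1 \<le> ?p" using P by (metis One_nat_def Suc_leI card_gt_0_iff empty_iff)
  interpret current_switching V E "k + 1" m ?p u v
    using G p_pos P(3) simple_graph_edge_neq[OF G e] by unfold_locales auto
  let ?C = "\<lambda>ns. (\<forall>i\<in>{1..<?p}. sources E (ns i) = other_blocks P Q i) \<and> sources E (ns ?p) = sym_diff Q {u, v}
      \<and> (\<forall>i\<in>{?p<..k + 1}. sources E (ns i) = {})"
  let ?D = "\<lambda>ns. \<not> curr_connected E (\<lambda>e. ns ?p e + ns (?p + 1) e) u v"
  have C_iff: "?C ns \<longleftrightarrow> (\<forall>i\<in>{1..k + 1}. sources E (ns i) = replica_sources u v P Q i)" for ns
  proof -
    have "{1..k + 1} = {1..<?p} \<union> {?p} \<union> {?p<..k + 1}" using p_pos P(3) by auto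
    then show ?thesis by (auto simp: replica_sources_def)
  qed
  have "R_PQ E k u v m P Q
      = (\<Sum>ns\<in>current_tuples E (k + 1) m. multinom E (k + 1) m ns * (if ?C ns \<and> ?D ns then 1 else 0))"
  proof -
    have "R_PQ E k u v m P Q
        = (\<Sum>ns\<in>{ns \<in> current_tuples E (k + 1) m. ?C ns}. multinom E (k + 1) m ns * (if ?D ns then 1 else 0))"
      unfolding R_PQ_def Let_def other_blocks_def[symmetric] by simp
    then show ?thesis
      unfolding sum.inter_filter[OF finite_current_tuples[OF finite_E]] by (simp cong: if_cong) (intro sum.cong, auto)
  qed
  also have "\<dots> = (\<Sum>L\<in>labelings E (k + 1) m. if ?C (label_counts E (k + 1) m L) \<and> ?D (label_counts E (k + 1) m L) then 1 else 0)"
    by (rule sum_current_tuples_multinom[OF finite_E])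
  also have "\<dots> = (\<Sum>L\<in>labelings E (k + 1) m. if (\<forall>i\<in>{1..k + 1}. sources E (label_counts E (k + 1) m L i)
                      = replica_sources u v P Q i) \<and> \<not> pair_connected L then 1 else 0)"
    unfolding C_iff pair_connected_def pair_current_def by simp
  also have "\<dots> = source_count E (k + 1) m (replica_sources u v P Q)
      - source_count E (k + 1) m ((replica_sources u v P Q)(?p := sym_diff (replica_sources u v P Q ?p) {u, v}, Suc ?p := {u, v}))"
    by (rule sum_disconnected_eq_diff) (simp add: replica_sources_def)
  also have "(replica_sources u v P Q)(?p := sym_diff (replica_sources u v P Q ?p) {u, v}, Suc ?p := {u, v})
      = switched_sources u v P Q"
    by (auto simp: replica_sources_def switched_sources_def fun_eq_iff)
  finally show ?thesis .
qed

lemma mixed_pderiv_scaled_pdJ_ursell_at_0: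
  assumes G: "simple_graph V E" and e: "{u, v} \<in> E" and j: "inj_on j {1..2*k}" and jV: "j ` {1..2*k} \<subseteq> V"
    and es: "set es = E" "distinct es"
  shows "mixed_pderiv es m (\<lambda>J. (Zfun V E J / 2 ^ card V) ^ (k + 1) * pdJ {u, v} (ursell V E (2*k) j) J) (\<lambda>_. 0)
       = (\<Sum>P\<in>even_partitions (j ` {1..2*k}). ursell_coeff P * (\<Sum>Q\<in>P.
            source_count E (k + 1) m (replica_sources u v P Q) - source_count E (k + 1) m (switched_sources u v P Q)))"
proof -
  define \<P> where "\<P> = even_partitions (j ` {1..2*k})"
  have fin: "finite \<P>" "\<And>P. P \<in> \<P> \<Longrightarrow> finite P"
    unfolding \<P>_def by (simp add: finite_even_partitions) (rule finite_even_partition[rotated], auto)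
  have blocks: "B \<subseteq> V" if "P \<in> \<P>" "B \<in> P" for P B
    using that jV partition_onD1 by (fastforce simp: \<P>_def even_partitions_def)
  define r where "r x = ursell_coeff (fst x) / 2 ^ (card V * (k + 1))" for x :: "'a set set \<times> 'a set"
  define A where "A x = replica_sources u v (fst x) (snd x)" for x :: "'a set set \<times> 'a set"
  define B where "B x = switched_sources u v (fst x) (snd x)" for x :: "'a set set \<times> 'a set"
  have "(\<lambda>J. (Zfun V E J / 2 ^ card V) ^ (k + 1) * pdJ {u, v} (ursell V E (2*k) j) J)
      = (\<lambda>J. \<Sum>x\<in>Sigma \<P> (\<lambda>P. P). r x *
            ((\<Prod>i=1..k+1. ising_sum V E (A x i) J) - (\<Prod>i=1..k+1. ising_sum V E (B x i) J)))"
    unfolding scaled_pdJ_ursell[OF G e j jV] \<P>_def[symmetric] using fin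
    by (simp add: sum.Sigma split_def r_def A_def B_def)
  moreover have "A x i \<subseteq> V \<and> B x i \<subseteq> V" if x: "x \<in> Sigma \<P> (\<lambda>P. P)" and i: "i \<in> {1..k+1}" for x i
  proof -
    obtain P Q where PQ: "x = (P, Q)" "P \<in> \<P>" "Q \<in> P" using x by auto
    show ?thesis
      using replica_sources_subset[OF fin(2) PQ(3), of V u v i] PQ blocks i
        simple_graph_edge_subset[OF G e] by (simp add: A_def B_def)
  qed
  ultimately have "mixed_pderiv es m (\<lambda>J. (Zfun V E J / 2 ^ card V) ^ (k + 1) * pdJ {u, v} (ursell V E (2*k) j) J) (\<lambda>_. 0)
      = 2 ^ (card V * (k + 1)) * (\<Sum>x\<in>Sigma \<P> (\<lambda>P. P). r x *
            (source_count E (k + 1) m (A x) - source_count E (k + 1) m (B x)))"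
    using fin by (simp only:) (rule mixed_pderiv_replica_products_at_0[OF G es], auto)
  also have "\<dots> = (\<Sum>(P, Q)\<in>Sigma \<P> (\<lambda>P. P). ursell_coeff P *
      (source_count E (k + 1) m (replica_sources u v P Q) - source_count E (k + 1) m (switched_sources u v P Q)))"
    unfolding sum_distrib_left by (intro sum.cong refl) (auto simp: r_def A_def B_def)
  also have "\<dots> = (\<Sum>P\<in>\<P>. ursell_coeff P * (\<Sum>Q\<in>P.
            source_count E (k + 1) m (replica_sources u v P Q) - source_count E (k + 1) m (switched_sources u v P Q)))"
    using fin by (simp add: sum.Sigma sum_distrib_left)
  finally show ?thesis unfolding \<P>_def .
qed

theorem mainTheorem5:
  fixes V :: "'a set" and E :: "'a set set" and k :: nat and j :: "nat \<Rightarrow> 'a"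
    and u v :: 'a and m :: "'a set \<Rightarrow> nat" and es :: "'a set list"
  assumes "finite V"
    and "E \<subseteq> {{x, y} | x y. x \<in> V \<and> y \<in> V \<and> x \<noteq> y}"
    and "k \<ge> 1"
    and "inj_on j {1..2*k}"
    and "j ` {1..2*k} \<subseteq> V"
    and "{u, v} \<in> E"
    and "distinct es" and "set es = E"
  shows "R_fn E k j u v m =
    mixed_pderiv es m
      (\<lambda>J. (Zfun V E J / 2 ^ card V) ^ (k + 1) * pdJ {u, v} (ursell V E (2*k) j) J)
      (\<lambda>_. 0)"
proof -
  have G: "simple_graph V E" unfolding simple_graph_def using assms(1,2) by blast
  let ?\<P> = "even_partitions (j ` {1..2*k})"
  have "mixed_pderiv es m (\<lambda>J. (Zfun V E J / 2 ^ card V) ^ (k + 1) * pdJ {u, v} (ursell V E (2*k) j) J) (\<lambda>_. 0)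
      = (\<Sum>P\<in>?\<P>. ursell_coeff P * (\<Sum>Q\<in>P.
            source_count E (k + 1) m (replica_sources u v P Q) - source_count E (k + 1) m (switched_sources u v P Q)))"
    by (rule mixed_pderiv_scaled_pdJ_ursell_at_0[OF G assms(6,4,5,8,7)])
  also have "\<dots> = (\<Sum>P\<in>?\<P>. ursell_coeff P * R_P E k u v m P)"
    unfolding R_P_def
  proof (intro sum.cong refl arg_cong2[where f = "(*)"])
    fix P Q assume P: "P \<in> ?\<P>" and Q: "Q \<in> P"
    have "card P \<le> k" using card_even_partition_le[OF _ P] card_image[OF assms(4)] by simp
    then show "source_count E (k + 1) m (replica_sources u v P Q) - source_count E (k + 1) m (switched_sources u v P Q)
        = R_PQ E k u v m P Q"
      using R_PQ_eq_source_count_diff[OF G assms(6) _ Q] finite_even_partition[OF _ P] by simp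
  qed
  also have "\<dots> = R_fn E k j u v m"
    unfolding R_fn_def even_partitions_def ursell_coeff_def ..
  finally show ?thesis ..
qed

end
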